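(* Assume (A1)–(A3) and consider the iterates of SMVR with an arbitrary sequence $\beta_t\in[0,1]$. Then for every $t\ge2$ and every $i\in\{1,\dots,K\}$, $$\mathbb{E}\|\mathbf{v}_t^i-\nabla f_i(\mathbf{u}_t^{i-1})\|^2\le(1-\beta_t)\,\mathbb{E}\|\mathbf{v}_{t-1}^i-\nabla f_i(\mathbf{u}_{t-1}^{i-1})\|^2+2\beta_t^2\sigma_J^2+2\mathcal{L}_J^2\,\mathbb{E}\|\mathbf{u}_t^{i-1}-\mathbf{u}_{t-1}^{i-1}\|^2,$$ $$\mathbb{E}\|\mathbf{u}_t^i-f_i(\mathbf{u}_t^{i-1})\|^2\le(1-\beta_t)\,\mathbb{E}\|\mathbf{u}_{t-1}^i-f_i(\mathbf{u}_{t-1}^{i-1})\|^2+2\beta_t^2\sigma_f^2+2\mathcal{L}_f^2\,\mathbb{E}\|\mathbf{u}_t^{i-1}-\mathbf{u}_{t-1}^{i-1}\|^2.$$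
   Context: Setting: $K\ge1$, $d_0=d$, $d_K=1$, $f_i:\mathbb{R}^{d_{i-1}}\to\mathbb{R}^{d_i}$, $F=f_K\circ\cdots\circ f_1$; $\nabla g(x)\in\mathbb{R}^{m\times n}$ is the transposed Jacobian of $g:\mathbb{R}^m\to\mathbb{R}^n$; vector norms Euclidean, matrix norms Frobenius. For each level $i$ there is a stochastic oracle: for a random sample $\xi\sim\mathcal{D}_i$ one can evaluate $f_i(\cdot;\xi)$ and $\nabla f_i(\cdot;\xi)$. Assumptions: (A1) each $f_i$ is $L_f$-Lipschitz, $\|\nabla f_i(x)\|\le L_f$ for all $x$, and $\nabla f_i$ is $L_J$-Lipschitz. (A2) for all $x$: $\mathbb{E}_\xi f_i(x;\xi)=f_i(x)$, $\mathbb{E}_\xi\nabla f_i(x;\xi)=\nabla f_i(x)$, $\mathbb{E}_\xi\|f_i(x;\xi)-f_i(x)\|^2\le\sigma_f^2$, $\mathbb{E}_\xi\|\nabla f_i(x;\xi)-\nabla f_i(x)\|^2\le\sigma_J^2$. (A3) for all $x,y$: $\mathbb{E}_\xi\|f_i(x;\xi)-f_i(y;\xi)\|^2\le\mathcal{L}_f^2\|x-y\|^2$ and $\mathbb{E}_\xi\|\nabla f_i(x;\xi)-\nabla f_i(y;\xi)\|^2\le\mathcal{L}_J^2\|x-y\|^2$. SMVR: given $\mathbf{w}_1$, step sizes $\eta_t>0$ and $\beta_t\in(0,1]$: at iteration $t$ draw $\xi_t^1,\dots,\xi_t^K$ ($\xi_t^i\sim\mathcal{D}_i$), mutually independent and independent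 of the past; set $\mathbf{u}_t^0=\mathbf{w}_t$. For $t=1$: $\mathbf{u}_1^i=f_i(\mathbf{u}_1^{i-1};\xi_1^i)$, $\mathbf{v}_1^i=\Pi_{L_f}[\nabla f_i(\mathbf{u}_1^{i-1};\xi_1^i)]$. For $t\ge2$, $i=1,\dots,K$: $\mathbf{u}_t^i=(1-\beta_t)\mathbf{u}_{t-1}^i+\beta_tf_i(\mathbf{u}_t^{i-1};\xi_t^i)+(1-\beta_t)\big(f_i(\mathbf{u}_t^{i-1};\xi_t^i)-f_i(\mathbf{u}_{t-1}^{i-1};\xi_t^i)\big)$ and $\mathbf{v}_t^i=\Pi_{L_f}\big[(1-\beta_t)\mathbf{v}_{t-1}^i+\beta_t\nabla f_i(\mathbf{u}_t^{i-1};\xi_t^i)+(1-\beta_t)\big(\nabla f_i(\mathbf{u}_t^{i-1};\xi_t^i)-\nabla f_i(\mathbf{u}_{t-1}^{i-1};\xi_t^i)\big)\big]$. Then $\mathbf{v}_t=\mathbf{v}_t^1\cdots\mathbf{v}_t^K$ and $\mathbf{w}_{t+1}=\mathbf{w}_t-\eta_t\mathbf{v}_t$. $\Pi_{L_f}$ is the Euclidean (Frobenius) projection onto the closed ball of radius $L_f$. *)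

theory Defs
  imports "HOL-Probability.Probability"
begin

text \<open>Vectors of R^n are represented as functions nat => real supported on {..<n};
  n x m matrices as functions nat => nat => real supported on {..<n} x {..<m}.\<close>

type_synonym vec = "nat \<Rightarrow> real"
type_synonym mat = "nat \<Rightarrow> nat \<Rightarrow> real"

definition vecs :: "nat \<Rightarrow> vec set" where
  "vecs n = {x. \<forall>j\<ge>n. x j = 0}"

definition mats :: "nat \<Rightarrow> nat \<Rightarrow> mat set" where
  "mats m n = {A. \<forall>j k. (m \<le> j \<or> n \<le> k) \<longrightarrow> A j k = 0}"

definition vnorm :: "nat \<Rightarrow> vec \<Rightarrow> real" where
  "vnorm n x = sqrt (\<Sum>j<n. (x j)\<^sup>2)"

definition fnorm :: "nat \<Rightarrow> nat \<Rightarrow> mat \<Rightarrow> real" where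
  "fnorm m n A = sqrt (\<Sum>j<m. \<Sum>k<n. (A j k)\<^sup>2)"

definition proj_ball :: "nat \<Rightarrow> nat \<Rightarrow> real \<Rightarrow> mat \<Rightarrow> mat" where
  "proj_ball m n r A = (THE B. B \<in> mats m n \<and> fnorm m n B \<le> r \<and>
      (\<forall>C\<in>mats m n. fnorm m n C \<le> r \<longrightarrow>
          fnorm m n (\<lambda>j k. A j k - B j k) \<le> fnorm m n (\<lambda>j k. A j k - C j k)))"

text \<open>Transposed Jacobian: G x is the m x n matrix with G x j k = d g_k / d x_j,
  so g (x + h) = g x + (G x)^T h + o(|h|).\<close>
definition tjac_apply :: "nat \<Rightarrow> mat \<Rightarrow> vec \<Rightarrow> vec" where
  "tjac_apply m A h = (\<lambda>k. \<Sum>j<m. A j k * h j)"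

definition is_tjacobian :: "nat \<Rightarrow> nat \<Rightarrow> (vec \<Rightarrow> vec) \<Rightarrow> (vec \<Rightarrow> mat) \<Rightarrow> bool" where
  "is_tjacobian m n g G \<longleftrightarrow>
     (\<forall>x\<in>vecs m. \<forall>e>0. \<exists>\<delta>>0. \<forall>h\<in>vecs m. vnorm m h < \<delta> \<longrightarrow>
        vnorm n (\<lambda>k. g (\<lambda>j. x j + h j) k - g x k - tjac_apply m (G x) h k) \<le> e * vnorm m h)"

definition mmul :: "nat \<Rightarrow> mat \<Rightarrow> mat \<Rightarrow> mat" where
  "mmul n A B = (\<lambda>j k. \<Sum>l<n. A j l * B l k)"

primrec chain :: "(nat \<Rightarrow> nat) \<Rightarrow> (nat \<Rightarrow> mat) \<Rightarrow> nat \<Rightarrow> mat" where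
  "chain d V 0 = (\<lambda>j k. if j = k then 1 else 0)"
| "chain d V (Suc i) = mmul (d i) (chain d V i) (V (Suc i))"

text \<open>v_t = v_t^1 ... v_t^K, a d_0 x 1 matrix, read as a vector.\<close>
definition dirvec :: "(nat \<Rightarrow> nat) \<Rightarrow> nat \<Rightarrow> (nat \<Rightarrow> mat) \<Rightarrow> vec" where
  "dirvec d K V = (\<lambda>j. chain d V K j 0)"

text \<open>One SMVR iteration.  fo i x s = f_i(x; s), Jo i x s = nabla f_i(x; s);
  s i is the sample of level i drawn in this iteration; U 0 = w_t.\<close>
primrec smvr_U1 :: "(nat \<Rightarrow> vec \<Rightarrow> 'a \<Rightarrow> vec) \<Rightarrow> vec \<Rightarrow> (nat \<Rightarrow> 'a) \<Rightarrow> nat \<Rightarrow> vec" where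
  "smvr_U1 fo w s 0 = w"
| "smvr_U1 fo w s (Suc i) = fo (Suc i) (smvr_U1 fo w s i) (s (Suc i))"

definition smvr_V1 :: "(nat \<Rightarrow> nat) \<Rightarrow> real \<Rightarrow> (nat \<Rightarrow> vec \<Rightarrow> 'a \<Rightarrow> mat) \<Rightarrow> (nat \<Rightarrow> vec)
    \<Rightarrow> (nat \<Rightarrow> 'a) \<Rightarrow> nat \<Rightarrow> mat" where
  "smvr_V1 d Lf Jo U s i = proj_ball (d (i - 1)) (d i) Lf (Jo i (U (i - 1)) (s i))"

primrec smvr_Un :: "(nat \<Rightarrow> vec \<Rightarrow> 'a \<Rightarrow> vec) \<Rightarrow> real \<Rightarrow> (nat \<Rightarrow> vec) \<Rightarrow> vec \<Rightarrow> (nat \<Rightarrow> 'a)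
    \<Rightarrow> nat \<Rightarrow> vec" where
  "smvr_Un fo b Up w s 0 = w"
| "smvr_Un fo b Up w s (Suc i) =
     (\<lambda>k. (1 - b) * Up (Suc i) k + b * fo (Suc i) (smvr_Un fo b Up w s i) (s (Suc i)) k
          + (1 - b) * (fo (Suc i) (smvr_Un fo b Up w s i) (s (Suc i)) k
                       - fo (Suc i) (Up i) (s (Suc i)) k))"

definition smvr_Vn :: "(nat \<Rightarrow> nat) \<Rightarrow> real \<Rightarrow> (nat \<Rightarrow> vec \<Rightarrow> 'a \<Rightarrow> mat) \<Rightarrow> real
    \<Rightarrow> (nat \<Rightarrow> vec) \<Rightarrow> (nat \<Rightarrow> mat) \<Rightarrow> (nat \<Rightarrow> vec) \<Rightarrow> (nat \<Rightarrow> 'a) \<Rightarrow> nat \<Rightarrow> mat" where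
  "smvr_Vn d Lf Jo b Up Vp U s i = proj_ball (d (i - 1)) (d i) Lf
     (\<lambda>j k. (1 - b) * Vp i j k + b * Jo i (U (i - 1)) (s i) j k
          + (1 - b) * (Jo i (U (i - 1)) (s i) j k - Jo i (Up (i - 1)) (s i) j k))"

text \<open>smvr ... xs t = (U_t, V_t) for t >= 1, where U_t i = u_t^i (U_t 0 = w_t) and
  V_t i = v_t^i; xs t i is the sample xi_t^i.  The value at t = 0 is a dummy.\<close>
primrec smvr :: "(nat \<Rightarrow> nat) \<Rightarrow> nat \<Rightarrow> real \<Rightarrow> (nat \<Rightarrow> vec \<Rightarrow> 'a \<Rightarrow> vec)
    \<Rightarrow> (nat \<Rightarrow> vec \<Rightarrow> 'a \<Rightarrow> mat) \<Rightarrow> (nat \<Rightarrow> real) \<Rightarrow> (nat \<Rightarrow> real) \<Rightarrow> vec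
    \<Rightarrow> (nat \<Rightarrow> nat \<Rightarrow> 'a) \<Rightarrow> nat \<Rightarrow> (nat \<Rightarrow> vec) \<times> (nat \<Rightarrow> mat)" where
  "smvr d K Lf fo Jo \<eta> \<beta> w1 xs 0 = (\<lambda>_. w1, \<lambda>_ _ _. 0)"
| "smvr d K Lf fo Jo \<eta> \<beta> w1 xs (Suc t) =
     (if t = 0 then
        (let U = smvr_U1 fo w1 (xs 1) in (U, smvr_V1 d Lf Jo U (xs 1)))
      else
        (let (Up, Vp) = smvr d K Lf fo Jo \<eta> \<beta> w1 xs t;
             vt = dirvec d K Vp;
             w = (\<lambda>j. Up 0 j - \<eta> t * vt j);
             U = smvr_Un fo (\<beta> (Suc t)) Up w (xs (Suc t))
         in (U, smvr_Vn d Lf Jo (\<beta> (Suc t)) Up Vp U (xs (Suc t)))))"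

end

theory Submission
  imports Defs
begin

text \<open>Both estimates are recursive-momentum updates: the new tracking error is \<open>1 - \<beta>_t\<close> times
  the old one plus the noise \<open>\<beta>_t (P - p) + (1 - \<beta>_t) ((P - Q) - (p - q))\<close>, where \<open>P\<close> and \<open>Q\<close>
  are the level-\<open>i\<close> oracle evaluated with the fresh sample \<open>\<xi>_t^i\<close> at the current input
  \<open>u_t^{i-1}\<close> and at the previous input \<open>u_{t-1}^{i-1}\<close>, and \<open>p\<close>, \<open>q\<close> are their means.
  Conditionally on all samples drawn before \<open>\<xi>_t^i\<close> the noise has mean zero, so the cross term
  vanishes, and by (A2), (A3) and \<open>(a + b)\<^sup>2 \<le> 2 a\<^sup>2 + 2 b\<^sup>2\<close> its second moment is at most
  \<open>2 \<beta>_t\<^sup>2 \<sigma>\<^sup>2 + 2 \<L>\<^sup>2 |u_t^{i-1} - u_{t-1}^{i-1}|\<^sup>2\<close>. Projecting onto the \<open>L_f\<close>-ball can only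
  decrease the distance to \<open>\<nabla>f_i(u_t^{i-1})\<close>, which lies in the ball by (A1). Since \<open>\<xi>_t^i\<close> is
  independent of the earlier samples, the conditional bound integrates to the claimed bound on
  expectations.\<close>

section \<open>Projection onto a Frobenius ball\<close>

lemma vnorm_sq: "(vnorm n x)\<^sup>2 = (\<Sum>k<n. (x k)\<^sup>2)"
  unfolding vnorm_def by (simp add: sum_nonneg)

lemma fnorm_eq_L2_set: "fnorm m n A = L2_set (\<lambda>p. A (fst p) (snd p)) ({..<m} \<times> {..<n})"
  unfolding fnorm_def L2_set_def by (simp add: sum.cartesian_product case_prod_beta)

lemma fnorm_sq: "(fnorm m n A)\<^sup>2 = (\<Sum>p\<in>{..<m} \<times> {..<n}. (A (fst p) (snd p))\<^sup>2)"
  unfolding fnorm_eq_L2_set L2_set_def by (simp add: sum_nonneg)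

lemma fnorm_nonneg: "0 \<le> fnorm m n A"
  unfolding fnorm_def by (simp add: sum_nonneg)

lemma L2_set_radial_scale_le:
  assumes "0 \<le> r"
  shows "L2_set (\<lambda>k. min 1 (r / L2_set a S) * a k) S \<le> r"
proof -
  let ?N = "L2_set a S" and ?s = "min 1 (r / L2_set a S)"
  have "0 \<le> ?s" using assms by (simp add: L2_set_nonneg)
  then have "L2_set (\<lambda>k. ?s * a k) S = ?s * ?N"
    by (simp add: L2_set_def power_mult_distrib sum_distrib_left[symmetric] real_sqrt_mult)
  also have "\<dots> \<le> r"
    using assms L2_set_nonneg[of a S] by (cases "?N = 0") (auto simp: min_mult_distrib_right)
  finally show ?thesis .
qed

text \<open>The variational inequality characterising the projection onto a ball.\<close>
lemma radial_scale_obtuse: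
  fixes a c :: "'i \<Rightarrow> real"
  assumes "finite S" "0 \<le> r" "L2_set c S \<le> r"
  defines "s \<equiv> min 1 (r / L2_set a S)"
  shows "(\<Sum>k\<in>S. (a k - s * a k) * (c k - s * a k)) \<le> 0"
proof (cases "L2_set a S \<le> r")
  case True
  have "a k - s * a k = 0" if "k \<in> S" for k
  proof (cases "L2_set a S = 0")
    case True
    then show ?thesis using assms(1) that by (simp add: L2_set_eq_0_iff)
  next
    case False
    then have "0 < L2_set a S" using L2_set_nonneg[of a S] by linarith
    then have "s = 1" using \<open>L2_set a S \<le> r\<close> by (simp add: s_def le_divide_eq)
    then show ?thesis by simp
  qed
  then have "(\<Sum>k\<in>S. (a k - s * a k) * (c k - s * a k)) = 0" by (simp add: sum.neutral)
  then show ?thesis by simp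
next
  case False
  let ?N = "L2_set a S"
  have N: "r < ?N" and s: "s = r / ?N"
    using False assms(2) by (auto simp: s_def)
  have "(\<Sum>k\<in>S. a k * c k) \<le> (\<Sum>k\<in>S. \<bar>a k\<bar> * \<bar>c k\<bar>)"
    by (intro sum_mono) (metis abs_ge_self abs_mult)
  also have "\<dots> \<le> ?N * L2_set c S" by (rule L2_set_mult_ineq)
  also have "\<dots> \<le> ?N * r" using assms(3) by (intro mult_left_mono) auto
  also have "\<dots> = s * ?N\<^sup>2" using N assms(2) by (simp add: s power2_eq_square)
  also have "?N\<^sup>2 = (\<Sum>k\<in>S. (a k)\<^sup>2)" by (simp add: L2_set_def sum_nonneg)
  finally have inner: "(\<Sum>k\<in>S. a k * c k) - s * (\<Sum>k\<in>S. (a k)\<^sup>2) \<le> 0" by simp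
  have "(\<Sum>k\<in>S. (a k - s * a k) * (c k - s * a k))
      = (\<Sum>k\<in>S. (1 - s) * (a k * c k - s * (a k)\<^sup>2))"
    by (rule sum.cong) (auto simp: algebra_simps power2_eq_square)
  also have "\<dots> = (1 - s) * ((\<Sum>k\<in>S. a k * c k) - s * (\<Sum>k\<in>S. (a k)\<^sup>2))"
    by (simp only: sum_distrib_left[symmetric] sum_subtractf)
  also have "\<dots> \<le> 0"
    using inner N assms(2) by (intro mult_nonneg_nonpos) (auto simp: s)
  finally show ?thesis .
qed

definition radial_proj :: "nat \<Rightarrow> nat \<Rightarrow> real \<Rightarrow> mat \<Rightarrow> mat" where
  "radial_proj m n r A =
     (\<lambda>j k. if j < m \<and> k < n then min 1 (r / fnorm m n A) * A j k else 0)"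

lemma radial_proj_mats: "radial_proj m n r A \<in> mats m n"
  by (auto simp: radial_proj_def mats_def)

lemma fnorm_radial_proj_le:
  assumes "0 \<le> r" shows "fnorm m n (radial_proj m n r A) \<le> r"
proof -
  have "fnorm m n (radial_proj m n r A)
      = L2_set (\<lambda>p. min 1 (r / fnorm m n A) * A (fst p) (snd p)) ({..<m} \<times> {..<n})"
    unfolding fnorm_eq_L2_set by (rule L2_set_cong) (auto simp: radial_proj_def fnorm_eq_L2_set)
  then show ?thesis
    using L2_set_radial_scale_le[OF assms] by (simp add: fnorm_eq_L2_set)
qed

lemma radial_scale_pythagoras:
  fixes a c :: "'i \<Rightarrow> real"
  assumes "finite S" "0 \<le> r" "L2_set c S \<le> r"
  defines "s \<equiv> min 1 (r / L2_set a S)"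
  shows "(\<Sum>k\<in>S. (a k - s * a k)\<^sup>2) + (\<Sum>k\<in>S. (s * a k - c k)\<^sup>2) \<le> (\<Sum>k\<in>S. (a k - c k)\<^sup>2)"
proof -
  have "(\<Sum>k\<in>S. (a k - c k)\<^sup>2)
      = (\<Sum>k\<in>S. (a k - s * a k)\<^sup>2 + (s * a k - c k)\<^sup>2 - 2 * ((a k - s * a k) * (c k - s * a k)))"
    by (rule sum.cong) (simp_all add: power2_eq_square algebra_simps)
  also have "\<dots> = (\<Sum>k\<in>S. (a k - s * a k)\<^sup>2) + (\<Sum>k\<in>S. (s * a k - c k)\<^sup>2)
      - 2 * (\<Sum>k\<in>S. (a k - s * a k) * (c k - s * a k))"
    by (simp add: sum.distrib sum_subtractf sum_distrib_left)
  finally show ?thesis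
    using radial_scale_obtuse[OF assms(1-3), of a] unfolding s_def by linarith
qed

lemma radial_proj_pythagoras:
  assumes "0 \<le> r" "fnorm m n C \<le> r"
  shows "(fnorm m n (\<lambda>j k. A j k - radial_proj m n r A j k))\<^sup>2
      + (fnorm m n (\<lambda>j k. radial_proj m n r A j k - C j k))\<^sup>2
     \<le> (fnorm m n (\<lambda>j k. A j k - C j k))\<^sup>2"
proof -
  let ?S = "{..<m} \<times> {..<n}" and ?a = "\<lambda>p. A (fst p) (snd p)"
  let ?s = "min 1 (r / L2_set ?a ?S)"
  have "radial_proj m n r A (fst p) (snd p) = ?s * ?a p" if "p \<in> ?S" for p
    using that by (auto simp: radial_proj_def fnorm_eq_L2_set)
  then show ?thesis
    using radial_scale_pythagoras[of ?S r "\<lambda>p. C (fst p) (snd p)" ?a] assms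
    unfolding fnorm_sq by (simp add: fnorm_eq_L2_set cong: sum.cong)
qed

lemma mats_eq_if_fnorm_diff_eq_0:
  assumes "B \<in> mats m n" "B' \<in> mats m n" "fnorm m n (\<lambda>j k. B j k - B' j k) = 0"
  shows "B = B'"
proof -
  have inside: "\<forall>p\<in>{..<m} \<times> {..<n}. (B (fst p) (snd p) - B' (fst p) (snd p))\<^sup>2 = 0"
    using assms(3) fnorm_sq[of m n "\<lambda>j k. B j k - B' j k"] by (simp add: sum_nonneg_eq_0_iff)
  have "B j k = B' j k" for j k
    using inside assms(1,2) unfolding mats_def by (cases "j < m \<and> k < n") (auto simp: not_less)
  then show ?thesis by (simp add: fun_eq_iff)
qed

lemma proj_ball_eq_radial_proj:
  assumes r: "0 \<le> r" shows "proj_ball m n r A = radial_proj m n r A"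
  unfolding proj_ball_def
proof (rule the_equality)
  let ?P = "radial_proj m n r A"
  have closest_sq: "(fnorm m n (\<lambda>j k. A j k - ?P j k))\<^sup>2 \<le> (fnorm m n (\<lambda>j k. A j k - C j k))\<^sup>2"
    if "fnorm m n C \<le> r" for C
    using radial_proj_pythagoras[OF r that, of A] zero_le_power2 by (smt (verit))
  show "?P \<in> mats m n \<and> fnorm m n ?P \<le> r \<and> (\<forall>C\<in>mats m n. fnorm m n C \<le> r \<longrightarrow>
      fnorm m n (\<lambda>j k. A j k - ?P j k) \<le> fnorm m n (\<lambda>j k. A j k - C j k))"
    using power2_le_imp_le[OF closest_sq fnorm_nonneg]
    by (simp add: radial_proj_mats fnorm_radial_proj_le[OF r])
  fix B assume B: "B \<in> mats m n \<and> fnorm m n B \<le> r \<and> (\<forall>C\<in>mats m n. fnorm m n C \<le> r \<longrightarrow>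
      fnorm m n (\<lambda>j k. A j k - B j k) \<le> fnorm m n (\<lambda>j k. A j k - C j k))"
  then have "(fnorm m n (\<lambda>j k. A j k - B j k))\<^sup>2 \<le> (fnorm m n (\<lambda>j k. A j k - ?P j k))\<^sup>2"
    using radial_proj_mats fnorm_radial_proj_le[OF r] fnorm_nonneg by (blast intro: power_mono)
  moreover have "fnorm m n B \<le> r" using B by blast
  ultimately have "(fnorm m n (\<lambda>j k. ?P j k - B j k))\<^sup>2 \<le> 0"
    using radial_proj_pythagoras[OF r \<open>fnorm m n B \<le> r\<close>, of A] by linarith
  then have "fnorm m n (\<lambda>j k. ?P j k - B j k) = 0" by simp
  with B show "B = ?P" using mats_eq_if_fnorm_diff_eq_0[OF radial_proj_mats] by metis
qed

lemma proj_ball_closer: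
  assumes "0 \<le> r" "fnorm m n C \<le> r"
  shows "(fnorm m n (\<lambda>j k. proj_ball m n r A j k - C j k))\<^sup>2 \<le> (fnorm m n (\<lambda>j k. A j k - C j k))\<^sup>2"
  using radial_proj_pythagoras[OF assms, of A] zero_le_power2
  unfolding proj_ball_eq_radial_proj[OF assms(1)] by (smt (verit))

section \<open>One step of the recursive momentum estimator\<close>

lemma integral_le_of_nn_integral_le:
  fixes f :: "'a \<Rightarrow> real"
  assumes "f \<in> borel_measurable M" "\<And>x. 0 \<le> f x" "(\<integral>\<^sup>+x. ennreal (f x) \<partial>M) \<le> ennreal c" "0 \<le> c"
  shows "integrable M f" "(\<integral>x. f x \<partial>M) \<le> c"
proof -
  show int: "integrable M f"
    using assms by (intro integrableI_nonneg) (auto simp: top.not_eq_extremum order.strict_trans1)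
  have "ennreal (\<integral>x. f x \<partial>M) = (\<integral>\<^sup>+x. ennreal (f x) \<partial>M)"
    using int assms(2) by (subst nn_integral_eq_integral) auto
  with assms(3) have "ennreal (\<integral>x. f x \<partial>M) \<le> ennreal c" by simp
  with assms(4) show "(\<integral>x. f x \<partial>M) \<le> c" by simp
qed

lemma (in prob_space) integral_sum_square_shift:
  fixes S :: "'i set" and Z :: "'a \<Rightarrow> 'i \<Rightarrow> real"
  assumes "finite S" "\<And>k. k \<in> S \<Longrightarrow> integrable M (\<lambda>y. Z y k)"
    and "integrable M (\<lambda>y. \<Sum>k\<in>S. (Z y k)\<^sup>2)"
  shows "integrable M (\<lambda>y. \<Sum>k\<in>S. (a k + Z y k)\<^sup>2)"
    "(\<integral>y. (\<Sum>k\<in>S. (a k + Z y k)\<^sup>2) \<partial>M)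
       = (\<Sum>k\<in>S. (a k)\<^sup>2) + 2 * (\<Sum>k\<in>S. a k * (\<integral>y. Z y k \<partial>M)) + (\<integral>y. (\<Sum>k\<in>S. (Z y k)\<^sup>2) \<partial>M)"
proof -
  have expand: "(\<lambda>y. \<Sum>k\<in>S. (a k + Z y k)\<^sup>2)
      = (\<lambda>y. (\<Sum>k\<in>S. (a k)\<^sup>2) + (\<Sum>k\<in>S. 2 * a k * Z y k) + (\<Sum>k\<in>S. (Z y k)\<^sup>2))"
    by (auto simp: fun_eq_iff sum.distrib[symmetric] power2_eq_square algebra_simps)
  have cross: "integrable M (\<lambda>y. \<Sum>k\<in>S. 2 * a k * Z y k)"
    using assms(2) by (intro Bochner_Integration.integrable_sum) auto
  show "integrable M (\<lambda>y. \<Sum>k\<in>S. (a k + Z y k)\<^sup>2)"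
    unfolding expand using cross assms(3) by simp
  have "(\<integral>y. (\<Sum>k\<in>S. 2 * a k * Z y k) \<partial>M) = 2 * (\<Sum>k\<in>S. a k * (\<integral>y. Z y k \<partial>M))"
    using assms(2) by (simp add: sum_distrib_left mult.assoc)
  then show "(\<integral>y. (\<Sum>k\<in>S. (a k + Z y k)\<^sup>2) \<partial>M)
       = (\<Sum>k\<in>S. (a k)\<^sup>2) + 2 * (\<Sum>k\<in>S. a k * (\<integral>y. Z y k \<partial>M)) + (\<integral>y. (\<Sum>k\<in>S. (Z y k)\<^sup>2) \<partial>M)"
    unfolding expand using cross assms(3) by (simp add: prob_space)
qed

lemma (in prob_space) integral_sum_square_centered_le:
  fixes S :: "'i set" and Z :: "'a \<Rightarrow> 'i \<Rightarrow> real"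
  assumes "finite S" "\<And>k. k \<in> S \<Longrightarrow> integrable M (\<lambda>y. Z y k)"
    and "integrable M (\<lambda>y. \<Sum>k\<in>S. (Z y k)\<^sup>2)"
  shows "integrable M (\<lambda>y. \<Sum>k\<in>S. (Z y k - (\<integral>y. Z y k \<partial>M))\<^sup>2)"
    "(\<integral>y. (\<Sum>k\<in>S. (Z y k - (\<integral>y. Z y k \<partial>M))\<^sup>2) \<partial>M) \<le> (\<integral>y. (\<Sum>k\<in>S. (Z y k)\<^sup>2) \<partial>M)"
proof -
  let ?m = "\<lambda>k. \<integral>y. Z y k \<partial>M"
  have shift: "(\<lambda>y. \<Sum>k\<in>S. (Z y k - ?m k)\<^sup>2) = (\<lambda>y. \<Sum>k\<in>S. (- ?m k + Z y k)\<^sup>2)"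
    by simp
  show "integrable M (\<lambda>y. \<Sum>k\<in>S. (Z y k - ?m k)\<^sup>2)"
    unfolding shift by (rule integral_sum_square_shift(1)[OF assms])
  have "(\<integral>y. (\<Sum>k\<in>S. (Z y k - ?m k)\<^sup>2) \<partial>M)
      = (\<integral>y. (\<Sum>k\<in>S. (Z y k)\<^sup>2) \<partial>M) - (\<Sum>k\<in>S. (?m k)\<^sup>2)"
  proof -
    have "(\<integral>y. (\<Sum>k\<in>S. (- ?m k + Z y k)\<^sup>2) \<partial>M)
        = (\<Sum>k\<in>S. (- ?m k)\<^sup>2) + 2 * (\<Sum>k\<in>S. - ?m k * ?m k) + (\<integral>y. (\<Sum>k\<in>S. (Z y k)\<^sup>2) \<partial>M)"
      by (rule integral_sum_square_shift(2)[OF assms])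
    moreover have "(\<Sum>k\<in>S. - ?m k * ?m k) = - (\<Sum>k\<in>S. (?m k)\<^sup>2)"
      by (simp add: power2_eq_square sum_negf[symmetric])
    ultimately show ?thesis unfolding shift by simp
  qed
  then show "(\<integral>y. (\<Sum>k\<in>S. (Z y k - ?m k)\<^sup>2) \<partial>M) \<le> (\<integral>y. (\<Sum>k\<in>S. (Z y k)\<^sup>2) \<partial>M)"
    by (simp add: sum_nonneg)
qed

lemma sum_square_le_twice: "((x::real) + y)\<^sup>2 \<le> 2 * x\<^sup>2 + 2 * y\<^sup>2"
  using zero_le_power2[of "x - y"] by (simp add: power2_eq_square algebra_simps)

lemma (in prob_space) momentum_noise_second_moment:
  fixes S :: "'i set" and P Q :: "'a \<Rightarrow> 'i \<Rightarrow> real" and p q :: "'i \<Rightarrow> real"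
  assumes S: "finite S" and b: "0 \<le> b" "b \<le> 1"
    and P: "\<And>k. k \<in> S \<Longrightarrow> integrable M (\<lambda>y. P y k)" "\<And>k. k \<in> S \<Longrightarrow> (\<integral>y. P y k \<partial>M) = p k"
    and Q: "\<And>k. k \<in> S \<Longrightarrow> integrable M (\<lambda>y. Q y k)" "\<And>k. k \<in> S \<Longrightarrow> (\<integral>y. Q y k \<partial>M) = q k"
    and var: "integrable M (\<lambda>y. \<Sum>k\<in>S. (P y k - p k)\<^sup>2)" "(\<integral>y. (\<Sum>k\<in>S. (P y k - p k)\<^sup>2) \<partial>M) \<le> v"
    and diff: "integrable M (\<lambda>y. \<Sum>k\<in>S. (P y k - Q y k)\<^sup>2)"
      "(\<integral>y. (\<Sum>k\<in>S. (P y k - Q y k)\<^sup>2) \<partial>M) \<le> l"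
  defines "B y k \<equiv> b * (P y k - p k) + (1 - b) * ((P y k - Q y k) - (p k - q k))"
  shows "integrable M (\<lambda>y. \<Sum>k\<in>S. (B y k)\<^sup>2)" "(\<integral>y. (\<Sum>k\<in>S. (B y k)\<^sup>2) \<partial>M) \<le> 2 * b\<^sup>2 * v + 2 * l"
proof -
  let ?C = "\<lambda>y k. (P y k - Q y k) - (p k - q k)"
  have C: "integrable M (\<lambda>y. \<Sum>k\<in>S. (?C y k)\<^sup>2)" "(\<integral>y. (\<Sum>k\<in>S. (?C y k)\<^sup>2) \<partial>M) \<le> l"
    using integral_sum_square_centered_le[OF S _ diff(1)] diff(2) P(1) Q(1)
    by (simp_all add: P(2) Q(2))
  have pointwise: "(\<Sum>k\<in>S. (B y k)\<^sup>2) \<le> 2 * b\<^sup>2 * (\<Sum>k\<in>S. (P y k - p k)\<^sup>2) + 2 * (\<Sum>k\<in>S. (?C y k)\<^sup>2)"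
    for y
  proof -
    have "(B y k)\<^sup>2 \<le> 2 * b\<^sup>2 * (P y k - p k)\<^sup>2 + 2 * (?C y k)\<^sup>2" for k
    proof -
      have "(1 - b)\<^sup>2 * (?C y k)\<^sup>2 \<le> (?C y k)\<^sup>2"
        using b by (intro mult_left_le_one_le) (auto simp: power_le_one)
      then show ?thesis
        using sum_square_le_twice[of "b * (P y k - p k)" "(1 - b) * ?C y k"]
        by (simp add: B_def power_mult_distrib)
    qed
    then have "(\<Sum>k\<in>S. (B y k)\<^sup>2) \<le> (\<Sum>k\<in>S. 2 * b\<^sup>2 * (P y k - p k)\<^sup>2 + 2 * (?C y k)\<^sup>2)"
      by (rule sum_mono)
    then show ?thesis by (simp add: sum.distrib sum_distrib_left)
  qed
  have bound_int: "integrable M (\<lambda>y. 2 * b\<^sup>2 * (\<Sum>k\<in>S. (P y k - p k)\<^sup>2) + 2 * (\<Sum>k\<in>S. (?C y k)\<^sup>2))"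
    using var(1) C(1) by simp
  show int: "integrable M (\<lambda>y. \<Sum>k\<in>S. (B y k)\<^sup>2)"
  proof (rule Bochner_Integration.integrable_bound[OF bound_int _ AE_I2])
    show "(\<lambda>y. \<Sum>k\<in>S. (B y k)\<^sup>2) \<in> borel_measurable M"
      using P(1) Q(1) unfolding B_def by (intro borel_measurable_sum) auto
    show "norm (\<Sum>k\<in>S. (B y k)\<^sup>2) \<le> norm (2 * b\<^sup>2 * (\<Sum>k\<in>S. (P y k - p k)\<^sup>2) + 2 * (\<Sum>k\<in>S. (?C y k)\<^sup>2))"
      for y using pointwise[of y] by (simp add: sum_nonneg)
  qed
  have "(\<integral>y. (\<Sum>k\<in>S. (B y k)\<^sup>2) \<partial>M)
      \<le> (\<integral>y. 2 * b\<^sup>2 * (\<Sum>k\<in>S. (P y k - p k)\<^sup>2) + 2 * (\<Sum>k\<in>S. (?C y k)\<^sup>2) \<partial>M)"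
    using int bound_int pointwise by (rule integral_mono)
  also have "\<dots> = 2 * b\<^sup>2 * (\<integral>y. (\<Sum>k\<in>S. (P y k - p k)\<^sup>2) \<partial>M) + 2 * (\<integral>y. (\<Sum>k\<in>S. (?C y k)\<^sup>2) \<partial>M)"
    using var(1) C(1) by simp
  also have "\<dots> \<le> 2 * b\<^sup>2 * v + 2 * l"
    using var(2) C(2) by (intro add_mono mult_left_mono) auto
  finally show "(\<integral>y. (\<Sum>k\<in>S. (B y k)\<^sup>2) \<partial>M) \<le> 2 * b\<^sup>2 * v + 2 * l" .
qed

lemma (in prob_space) momentum_error_second_moment:
  fixes S :: "'i set" and P Q :: "'a \<Rightarrow> 'i \<Rightarrow> real" and A p q :: "'i \<Rightarrow> real"
  assumes S: "finite S" and b: "0 \<le> b" "b \<le> 1"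
    and P: "\<And>k. k \<in> S \<Longrightarrow> integrable M (\<lambda>y. P y k)" "\<And>k. k \<in> S \<Longrightarrow> (\<integral>y. P y k \<partial>M) = p k"
    and Q: "\<And>k. k \<in> S \<Longrightarrow> integrable M (\<lambda>y. Q y k)" "\<And>k. k \<in> S \<Longrightarrow> (\<integral>y. Q y k \<partial>M) = q k"
    and var: "integrable M (\<lambda>y. \<Sum>k\<in>S. (P y k - p k)\<^sup>2)" "(\<integral>y. (\<Sum>k\<in>S. (P y k - p k)\<^sup>2) \<partial>M) \<le> v"
    and diff: "integrable M (\<lambda>y. \<Sum>k\<in>S. (P y k - Q y k)\<^sup>2)"
      "(\<integral>y. (\<Sum>k\<in>S. (P y k - Q y k)\<^sup>2) \<partial>M) \<le> l"
  defines "E y k \<equiv> (1 - b) * A k + b * (P y k - p k) + (1 - b) * ((P y k - Q y k) - (p k - q k))"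
  shows "integrable M (\<lambda>y. \<Sum>k\<in>S. (E y k)\<^sup>2)"
    "(\<integral>y. (\<Sum>k\<in>S. (E y k)\<^sup>2) \<partial>M) \<le> (1 - b) * (\<Sum>k\<in>S. (A k)\<^sup>2) + 2 * b\<^sup>2 * v + 2 * l"
proof -
  define B where "B y k = b * (P y k - p k) + (1 - b) * ((P y k - Q y k) - (p k - q k))" for y k
  have E: "E y k = (1 - b) * A k + B y k" for y k by (simp add: E_def B_def)
  note noise = momentum_noise_second_moment[OF S b P Q var diff, folded B_def]
  have B_int: "integrable M (\<lambda>y. B y k)" if "k \<in> S" for k
    using P(1) Q(1) that by (simp add: B_def)
  have B_mean: "(\<integral>y. B y k \<partial>M) = 0" if "k \<in> S" for k
  proof -
    have "(\<integral>y. B y k \<partial>M)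
        = b * ((\<integral>y. P y k \<partial>M) - p k) + (1 - b) * (((\<integral>y. P y k \<partial>M) - (\<integral>y. Q y k \<partial>M)) - (p k - q k))"
      using P(1) Q(1) that by (simp add: B_def prob_space)
    then show ?thesis using P(2) Q(2) that by simp
  qed
  show "integrable M (\<lambda>y. \<Sum>k\<in>S. (E y k)\<^sup>2)"
    unfolding E using integral_sum_square_shift(1)[OF S B_int noise(1)] .
  have "(\<integral>y. (\<Sum>k\<in>S. (E y k)\<^sup>2) \<partial>M) = (\<Sum>k\<in>S. ((1 - b) * A k)\<^sup>2) + (\<integral>y. (\<Sum>k\<in>S. (B y k)\<^sup>2) \<partial>M)"
    unfolding E using integral_sum_square_shift(2)[OF S B_int noise(1)] by (simp add: B_mean)
  also have "(\<Sum>k\<in>S. ((1 - b) * A k)\<^sup>2) \<le> (1 - b) * (\<Sum>k\<in>S. (A k)\<^sup>2)"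
  proof -
    have "(1 - b)\<^sup>2 \<le> 1 - b" using b by (simp add: power2_eq_square mult_left_le_one_le)
    then have "(1 - b)\<^sup>2 * (\<Sum>k\<in>S. (A k)\<^sup>2) \<le> (1 - b) * (\<Sum>k\<in>S. (A k)\<^sup>2)"
      by (rule mult_right_mono) (simp add: sum_nonneg)
    then show ?thesis by (simp add: power_mult_distrib sum_distrib_left)
  qed
  finally show "(\<integral>y. (\<Sum>k\<in>S. (E y k)\<^sup>2) \<partial>M) \<le> (1 - b) * (\<Sum>k\<in>S. (A k)\<^sup>2) + 2 * b\<^sup>2 * v + 2 * l"
    using noise(2) by linarith
qed

lemma (in prob_space) nn_integral_momentum_error_le:
  fixes S :: "'i set" and P Q W :: "'a \<Rightarrow> 'i \<Rightarrow> real" and A p q :: "'i \<Rightarrow> real"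
  assumes S: "finite S" and b: "0 \<le> b" "b \<le> 1"
    and P: "\<And>k. k \<in> S \<Longrightarrow> integrable M (\<lambda>y. P y k)" "\<And>k. k \<in> S \<Longrightarrow> (\<integral>y. P y k \<partial>M) = p k"
    and Q: "\<And>k. k \<in> S \<Longrightarrow> integrable M (\<lambda>y. Q y k)" "\<And>k. k \<in> S \<Longrightarrow> (\<integral>y. Q y k \<partial>M) = q k"
    and var: "(\<integral>\<^sup>+y. ennreal (\<Sum>k\<in>S. (P y k - p k)\<^sup>2) \<partial>M) \<le> ennreal (\<sigma>\<^sup>2)"
    and diff: "(\<integral>\<^sup>+y. ennreal (\<Sum>k\<in>S. (P y k - Q y k)\<^sup>2) \<partial>M) \<le> ennreal (L\<^sup>2 * \<delta>\<^sup>2)"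
    and W: "\<And>y. y \<in> space M \<Longrightarrow> (\<Sum>k\<in>S. (W y k)\<^sup>2)
        \<le> (\<Sum>k\<in>S. ((1 - b) * A k + b * (P y k - p k) + (1 - b) * ((P y k - Q y k) - (p k - q k)))\<^sup>2)"
  shows "(\<integral>\<^sup>+y. ennreal (\<Sum>k\<in>S. (W y k)\<^sup>2) \<partial>M)
     \<le> ennreal (1 - b) * ennreal (\<Sum>k\<in>S. (A k)\<^sup>2) + ennreal (2 * b\<^sup>2 * \<sigma>\<^sup>2) + ennreal (2 * L\<^sup>2) * ennreal (\<delta>\<^sup>2)"
proof -
  let ?E = "\<lambda>y. \<Sum>k\<in>S. ((1 - b) * A k + b * (P y k - p k) + (1 - b) * ((P y k - Q y k) - (p k - q k)))\<^sup>2"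
  have "(\<lambda>y. \<Sum>k\<in>S. (P y k - p k)\<^sup>2) \<in> borel_measurable M"
    "(\<lambda>y. \<Sum>k\<in>S. (P y k - Q y k)\<^sup>2) \<in> borel_measurable M"
    using P(1) Q(1) by (auto intro!: borel_measurable_sum)
  moreover have "0 \<le> (\<Sum>k\<in>S. (P y k - p k)\<^sup>2)" "0 \<le> (\<Sum>k\<in>S. (P y k - Q y k)\<^sup>2)" for y
    by (simp_all add: sum_nonneg)
  ultimately have "integrable M (\<lambda>y. \<Sum>k\<in>S. (P y k - p k)\<^sup>2)"
      "(\<integral>y. (\<Sum>k\<in>S. (P y k - p k)\<^sup>2) \<partial>M) \<le> \<sigma>\<^sup>2"
    and "integrable M (\<lambda>y. \<Sum>k\<in>S. (P y k - Q y k)\<^sup>2)"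
      "(\<integral>y. (\<Sum>k\<in>S. (P y k - Q y k)\<^sup>2) \<partial>M) \<le> L\<^sup>2 * \<delta>\<^sup>2"
    using integral_le_of_nn_integral_le[OF _ _ var zero_le_power2]
      integral_le_of_nn_integral_le[OF _ _ diff mult_nonneg_nonneg[OF zero_le_power2 zero_le_power2]]
    by blast+
  note E = momentum_error_second_moment[OF S b P Q this, of A]
  have "(\<integral>\<^sup>+y. ennreal (\<Sum>k\<in>S. (W y k)\<^sup>2) \<partial>M) \<le> (\<integral>\<^sup>+y. ennreal (?E y) \<partial>M)"
    using W by (intro nn_integral_mono ennreal_leI)
  also have "\<dots> = ennreal (\<integral>y. ?E y \<partial>M)"
    by (rule nn_integral_eq_integral[OF E(1)]) (auto intro!: AE_I2 sum_nonneg)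
  also have "\<dots> \<le> ennreal ((1 - b) * (\<Sum>k\<in>S. (A k)\<^sup>2) + 2 * b\<^sup>2 * \<sigma>\<^sup>2 + 2 * (L\<^sup>2 * \<delta>\<^sup>2))"
    using E(2) by (rule ennreal_leI)
  also have "\<dots> = ennreal (1 - b) * ennreal (\<Sum>k\<in>S. (A k)\<^sup>2) + ennreal (2 * b\<^sup>2 * \<sigma>\<^sup>2)
      + ennreal (2 * L\<^sup>2) * ennreal (\<delta>\<^sup>2)"
    using b by (simp add: ennreal_mult sum_nonneg mult.assoc)
  finally show ?thesis .
qed

section \<open>Conditioning on independent samples\<close>

lemma (in prob_space) nn_integral_indep_vars_PiM:
  fixes X :: "'i \<Rightarrow> 'a \<Rightarrow> 'b"
  assumes "A \<noteq> {}" "indep_vars N X A" "\<And>p. p \<in> A \<Longrightarrow> distr M (N p) (X p) = N p"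
    and "f \<in> borel_measurable (Pi\<^sub>M A N)"
  shows "(\<integral>\<^sup>+\<omega>. f (\<lambda>p\<in>A. X p \<omega>) \<partial>M) = (\<integral>\<^sup>+x. f x \<partial>Pi\<^sub>M A N)"
proof -
  have rv: "\<And>p. p \<in> A \<Longrightarrow> random_variable (N p) (X p)"
    using assms(2) by (simp add: indep_vars_def)
  have "distr M (Pi\<^sub>M A N) (\<lambda>\<omega>. \<lambda>p\<in>A. X p \<omega>) = (\<Pi>\<^sub>M p\<in>A. distr M (N p) (X p))"
    using indep_vars_iff_distr_eq_PiM'[OF assms(1) rv] assms(2) by simp
  also have "\<dots> = Pi\<^sub>M A N"
    using assms(3) by (rule PiM_cong[OF refl])
  finally have "distr M (Pi\<^sub>M A N) (\<lambda>\<omega>. \<lambda>p\<in>A. X p \<omega>) = Pi\<^sub>M A N" .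
  moreover have "(\<lambda>\<omega>. \<lambda>p\<in>A. X p \<omega>) \<in> measurable M (Pi\<^sub>M A N)"
    using rv by (rule measurable_restrict)
  ultimately show ?thesis
    using assms(4) by (metis nn_integral_distr)
qed

lemma (in prob_space) nn_integral_indep_insert_le:
  fixes X :: "'i \<Rightarrow> 'a \<Rightarrow> 'b" and N :: "'i \<Rightarrow> 'b measure"
  assumes N: "\<And>p. p \<in> insert p0 I \<Longrightarrow> prob_space (N p)" and I: "finite I" "p0 \<notin> I"
    and indep: "indep_vars N X (insert p0 I)"
    and distr: "\<And>p. p \<in> insert p0 I \<Longrightarrow> distr M (N p) (X p) = N p"
    and H: "H \<in> borel_measurable (Pi\<^sub>M (insert p0 I) N)" and G: "G \<in> borel_measurable (Pi\<^sub>M I N)"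
    and le: "\<And>x. x \<in> space (Pi\<^sub>M I N) \<Longrightarrow> (\<integral>\<^sup>+y. H (x(p0 := y)) \<partial>N p0) \<le> G x"
  shows "(\<integral>\<^sup>+\<omega>. H (\<lambda>p\<in>insert p0 I. X p \<omega>) \<partial>M) \<le> (\<integral>\<^sup>+\<omega>. G (\<lambda>p\<in>I. X p \<omega>) \<partial>M)"
proof -
  define N' where "N' p = (if p \<in> insert p0 I then N p else N p0)" for p
  have N'_eq: "N' p = N p" if "p \<in> insert p0 I" for p using that by (simp add: N'_def)
  have PiM_eq: "Pi\<^sub>M J N' = Pi\<^sub>M J N" if "J \<subseteq> insert p0 I" for J
    using that by (intro PiM_cong) (auto simp: N'_eq)
  interpret product_sigma_finite N'
    using N by (simp add: N'_def product_sigma_finite_def prob_space_imp_sigma_finite)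
  have indep': "indep_vars N' X (insert p0 I)"
    using indep indep_vars_cong[of "insert p0 I" "insert p0 I" X X N N'] by (simp add: N'_eq)
  have distr': "distr M (N' p) (X p) = N' p" if "p \<in> insert p0 I" for p
    using distr that by (simp add: N'_eq)
  have H': "H \<in> borel_measurable (Pi\<^sub>M (insert p0 I) N')" using H by (simp add: PiM_eq)
  have G': "(\<lambda>x. G (restrict x I)) \<in> borel_measurable (Pi\<^sub>M (insert p0 I) N')"
    using measurable_restrict_subset[of I "insert p0 I" N'] G by (simp add: PiM_eq subset_insertI)
  have "(\<integral>\<^sup>+\<omega>. H (\<lambda>p\<in>insert p0 I. X p \<omega>) \<partial>M) = (\<integral>\<^sup>+x. H x \<partial>Pi\<^sub>M (insert p0 I) N')"
    using indep' distr' H' by (intro nn_integral_indep_vars_PiM) auto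
  also have "\<dots> = (\<integral>\<^sup>+x. (\<integral>\<^sup>+y. H (x(p0 := y)) \<partial>N' p0) \<partial>Pi\<^sub>M I N')"
    using I H' by (rule product_nn_integral_insert)
  also have "\<dots> \<le> (\<integral>\<^sup>+x. G x \<partial>Pi\<^sub>M I N')"
    using le by (intro nn_integral_mono) (simp add: PiM_eq subset_insertI N'_eq)
  also have "\<dots> = (\<integral>\<^sup>+x. (\<integral>\<^sup>+y. G (restrict (x(p0 := y)) I) \<partial>N' p0) \<partial>Pi\<^sub>M I N')"
  proof (rule nn_integral_cong)
    fix x assume "x \<in> space (Pi\<^sub>M I N')"
    then have "restrict (x(p0 := y)) I = x" for y
      using I(2) by (simp add: space_PiM PiE_def extensional_restrict)
    then show "G x = (\<integral>\<^sup>+y. G (restrict (x(p0 := y)) I) \<partial>N' p0)"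
      using prob_space.emeasure_space_1[OF N, of p0] by (simp add: N'_eq)
  qed
  also have "\<dots> = (\<integral>\<^sup>+x. G (restrict x I) \<partial>Pi\<^sub>M (insert p0 I) N')"
    using I G' by (rule product_nn_integral_insert[symmetric])
  also have "\<dots> = (\<integral>\<^sup>+\<omega>. G (\<lambda>p\<in>I. X p \<omega>) \<partial>M)"
    using indep' distr' G' I(2) by (subst nn_integral_indep_vars_PiM[symmetric]) (auto simp: Int_absorb1)
  finally show ?thesis .
qed

lemma (in prob_space) nn_integral_affine:
  assumes "g \<in> borel_measurable M" "h \<in> borel_measurable M"
  shows "(\<integral>\<^sup>+x. a * g x + c + b * h x \<partial>M) = a * (\<integral>\<^sup>+x. g x \<partial>M) + c + b * (\<integral>\<^sup>+x. h x \<partial>M)"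
  using assms by (simp add: nn_integral_add nn_integral_cmult emeasure_space_1)

section \<open>The SMVR iterates\<close>

lemma chain_eq_0: "1 \<le> i \<Longrightarrow> d 0 \<le> j \<Longrightarrow> chain d V i j k = 0"
proof (induction i arbitrary: k)
  case (Suc i)
  then show ?case by (cases "i = 0") (auto simp: mmul_def intro!: sum.neutral)
qed simp

lemma dirvec_vecs: "1 \<le> K \<Longrightarrow> dirvec d K V \<in> vecs (d 0)"
  unfolding dirvec_def vecs_def using chain_eq_0 by auto

lemma chain_cong: "(\<And>j. j \<in> {1..i} \<Longrightarrow> V j = V' j) \<Longrightarrow> chain d V i = chain d V' i"
  by (induction i) auto

lemma smvr_U1_cong: "(\<And>j'. j' \<in> {1..j} \<Longrightarrow> s j' = s' j') \<Longrightarrow> smvr_U1 fo w s j = smvr_U1 fo w s' j"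
  by (induction j) auto

lemma smvr_Un_cong:
  "(\<And>j'. j' \<le> j \<Longrightarrow> Up j' = Up' j') \<Longrightarrow> (\<And>j'. j' \<in> {1..j} \<Longrightarrow> s j' = s' j') \<Longrightarrow>
    smvr_Un fo b Up w s j = smvr_Un fo b Up' w s' j"
  by (induction j) auto

locale smvr_iterates =
  fixes d :: "nat \<Rightarrow> nat" and K :: nat and Lf :: real
    and fo :: "nat \<Rightarrow> vec \<Rightarrow> 'a \<Rightarrow> vec" and Jo :: "nat \<Rightarrow> vec \<Rightarrow> 'a \<Rightarrow> mat"
    and \<eta> \<beta> :: "nat \<Rightarrow> real" and w1 :: vec
begin

abbreviation smvr_u :: "(nat \<Rightarrow> nat \<Rightarrow> 'a) \<Rightarrow> nat \<Rightarrow> nat \<Rightarrow> vec" where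
  "smvr_u xs t \<equiv> fst (smvr d K Lf fo Jo \<eta> \<beta> w1 xs t)"

abbreviation smvr_v :: "(nat \<Rightarrow> nat \<Rightarrow> 'a) \<Rightarrow> nat \<Rightarrow> nat \<Rightarrow> mat" where
  "smvr_v xs t \<equiv> snd (smvr d K Lf fo Jo \<eta> \<beta> w1 xs t)"

lemma smvr_one:
  "smvr_u xs (Suc 0) = smvr_U1 fo w1 (xs 1)"
  "smvr_v xs (Suc 0) = smvr_V1 d Lf Jo (smvr_U1 fo w1 (xs 1)) (xs 1)"
  by (simp_all add: Let_def)

lemma smvr_Suc:
  assumes "t \<noteq> 0"
  shows "smvr_u xs (Suc t) = smvr_Un fo (\<beta> (Suc t)) (smvr_u xs t)
      (\<lambda>j. smvr_u xs t 0 j - \<eta> t * dirvec d K (smvr_v xs t) j) (xs (Suc t))"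
    "smvr_v xs (Suc t)
      = smvr_Vn d Lf Jo (\<beta> (Suc t)) (smvr_u xs t) (smvr_v xs t) (smvr_u xs (Suc t)) (xs (Suc t))"
  using assms by (simp_all add: Let_def split: prod.split)

lemma smvr_u_recursion:
  assumes "2 \<le> t" "1 \<le> i"
  shows "smvr_u xs t i = (\<lambda>k. (1 - \<beta> t) * smvr_u xs (t - 1) i k
     + \<beta> t * fo i (smvr_u xs t (i - 1)) (xs t i) k
     + (1 - \<beta> t) * (fo i (smvr_u xs t (i - 1)) (xs t i) k - fo i (smvr_u xs (t - 1) (i - 1)) (xs t i) k))"
proof -
  obtain t' where t: "t = Suc t'" "t' \<noteq> 0" using assms by (cases t) auto
  obtain i' where "i = Suc i'" using assms by (cases i) auto
  then show ?thesis unfolding t using smvr_Suc(1)[OF t(2), of xs] by simp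
qed

lemma smvr_v_recursion:
  assumes "2 \<le> t"
  shows "smvr_v xs t i = proj_ball (d (i - 1)) (d i) Lf (\<lambda>a b. (1 - \<beta> t) * smvr_v xs (t - 1) i a b
     + \<beta> t * Jo i (smvr_u xs t (i - 1)) (xs t i) a b
     + (1 - \<beta> t) * (Jo i (smvr_u xs t (i - 1)) (xs t i) a b
       - Jo i (smvr_u xs (t - 1) (i - 1)) (xs t i) a b))"
proof -
  obtain t' where t: "t = Suc t'" "t' \<noteq> 0" using assms by (cases t) auto
  show ?thesis unfolding t using smvr_Suc(2)[OF t(2), of xs] by (simp add: smvr_Vn_def)
qed

lemma smvr_u_vecs:
  assumes "1 \<le> K" "w1 \<in> vecs (d 0)"
    and fo: "\<And>i x s. i \<in> {1..K} \<Longrightarrow> x \<in> vecs (d (i - 1)) \<Longrightarrow> fo i x s \<in> vecs (d i)"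
  shows "1 \<le> t \<Longrightarrow> j \<le> K \<Longrightarrow> smvr_u xs t j \<in> vecs (d j)"
proof (induction t arbitrary: j)
  case (Suc t)
  show ?case
  proof (cases "t = 0")
    case True
    show ?thesis
      using Suc.prems(2) unfolding True smvr_one
      by (induction j) (use assms fo in auto)
  next
    case False
    have prev: "smvr_u xs t j \<in> vecs (d j)" if "j \<le> K" for j
      using Suc.IH False that by simp
    have w: "(\<lambda>j. smvr_u xs t 0 j - \<eta> t * dirvec d K (smvr_v xs t) j) \<in> vecs (d 0)"
      using prev[of 0] dirvec_vecs[OF assms(1)] by (auto simp: vecs_def)
    show ?thesis
      using Suc.prems(2) unfolding smvr_Suc(1)[OF False]
    proof (induction j)
      case (Suc j)
      then show ?case using prev fo[of "Suc j"] by (auto simp: vecs_def)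
    qed (use w in simp)
  qed
qed simp

definition history :: "nat \<Rightarrow> nat \<Rightarrow> (nat \<times> nat) set" where
  "history t m = {1..<t} \<times> {1..K} \<union> {t} \<times> {1..m}"

lemma history_insert:
  assumes "1 \<le> t" "i \<in> {1..K}"
  shows "history t i = insert (t, i) (history t (i - 1))" "(t, i) \<notin> history t (i - 1)"
    "finite (history t (i - 1))" "history t i \<subseteq> {1..} \<times> {1..K}"
  using assms by (auto simp: history_def)

lemma history_agree_update:
  "1 \<le> i \<Longrightarrow> \<forall>(s, j)\<in>history t (i - 1). (xs(t := (xs t)(i := y))) s j = xs s j"
  by (auto simp: history_def)

lemma smvr_cong_before:
  assumes agree: "\<And>s j. s \<in> {1..<t} \<Longrightarrow> j \<in> {1..K} \<Longrightarrow> xs s j = xs' s j"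
  shows "s < t \<Longrightarrow> (\<forall>j\<le>K. smvr_u xs s j = smvr_u xs' s j) \<and> (\<forall>j\<in>{1..K}. smvr_v xs s j = smvr_v xs' s j)"
proof (induction s)
  case (Suc s)
  show ?case
  proof (cases "s = 0")
    case True
    have "\<forall>j\<le>K. smvr_U1 fo w1 (xs 1) j = smvr_U1 fo w1 (xs' 1) j"
      using agree Suc.prems True by (auto intro!: smvr_U1_cong)
    then show ?thesis
      using agree Suc.prems unfolding True smvr_one by (auto simp: smvr_V1_def)
  next
    case False
    have IH: "\<forall>j\<le>K. smvr_u xs s j = smvr_u xs' s j" "\<forall>j\<in>{1..K}. smvr_v xs s j = smvr_v xs' s j"
      using Suc by auto
    have dv: "dirvec d K (smvr_v xs s) = dirvec d K (smvr_v xs' s)"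
      unfolding dirvec_def using chain_cong[of K "smvr_v xs s" "smvr_v xs' s" d] IH(2) by simp
    have u: "\<forall>j\<le>K. smvr_u xs (Suc s) j = smvr_u xs' (Suc s) j"
      unfolding smvr_Suc[OF False] dv using IH(1) agree Suc.prems False
      by (auto intro!: smvr_Un_cong)
    then show ?thesis
      unfolding smvr_Suc(2)[OF False] smvr_Vn_def using IH agree Suc.prems False by auto
  qed
qed simp

lemma smvr_history_cong:
  assumes agree: "\<forall>(s, j)\<in>history t m. xs s j = xs' s j" and m: "m \<le> K" and t: "2 \<le> t"
  shows "j \<le> K \<Longrightarrow> smvr_u xs (t - 1) j = smvr_u xs' (t - 1) j"
    and "j \<in> {1..K} \<Longrightarrow> smvr_v xs (t - 1) j = smvr_v xs' (t - 1) j"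
    and "j \<le> m \<Longrightarrow> smvr_u xs t j = smvr_u xs' t j"
    and "j \<in> {1..m} \<Longrightarrow> smvr_v xs t j = smvr_v xs' t j"
proof -
  obtain s where ts: "t = Suc s" and s: "s \<noteq> 0" using t by (cases t) auto
  have before: "\<And>s' j. s' \<in> {1..<t} \<Longrightarrow> j \<in> {1..K} \<Longrightarrow> xs s' j = xs' s' j"
    using agree by (auto simp: history_def)
  have "(\<forall>j\<le>K. smvr_u xs s j = smvr_u xs' s j) \<and> (\<forall>j\<in>{1..K}. smvr_v xs s j = smvr_v xs' s j)"
    using smvr_cong_before[of t xs xs' s] before ts by blast
  then have u: "\<forall>j\<le>K. smvr_u xs s j = smvr_u xs' s j" and v: "\<forall>j\<in>{1..K}. smvr_v xs s j = smvr_v xs' s j"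
    by auto
  then show "j \<le> K \<Longrightarrow> smvr_u xs (t - 1) j = smvr_u xs' (t - 1) j"
    and "j \<in> {1..K} \<Longrightarrow> smvr_v xs (t - 1) j = smvr_v xs' (t - 1) j"
    using ts by auto
  have dv: "dirvec d K (smvr_v xs s) = dirvec d K (smvr_v xs' s)"
    unfolding dirvec_def using chain_cong[of K "smvr_v xs s" "smvr_v xs' s" d] v by simp
  have current: "\<And>j. j \<in> {1..m} \<Longrightarrow> xs t j = xs' t j"
    using agree by (auto simp: history_def)
  have u_now: "\<forall>j\<le>m. smvr_u xs t j = smvr_u xs' t j"
    unfolding ts smvr_Suc[OF s] dv using u m current[unfolded ts]
    by (auto intro!: smvr_Un_cong)
  then show "j \<le> m \<Longrightarrow> smvr_u xs t j = smvr_u xs' t j" by auto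
  show "smvr_v xs t j = smvr_v xs' t j" if j: "j \<in> {1..m}"
  proof -
    have "smvr_u xs t (j - 1) = smvr_u xs' t (j - 1)" "xs t j = xs' t j"
      "smvr_u xs s (j - 1) = smvr_u xs' s (j - 1)" "smvr_v xs s j = smvr_v xs' s j"
      using u_now current u v m j by auto
    then show ?thesis
      unfolding ts smvr_Suc(2)[OF s] smvr_Vn_def by (simp del: smvr.simps)
  qed
qed

end

section \<open>The stochastic model\<close>

lemma borel_measurable_oracle_comp:
  fixes F :: "vec \<Rightarrow> 'a \<Rightarrow> real"
  assumes F: "(\<lambda>(x, s). F x s) \<in> borel_measurable (Pi\<^sub>M UNIV (\<lambda>_. borel) \<Otimes>\<^sub>M Dm)"
    and U: "\<And>k. (\<lambda>z. U z k) \<in> borel_measurable N" and Y: "Y \<in> measurable N Dm"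
  shows "(\<lambda>z. F (U z) (Y z)) \<in> borel_measurable N"
proof -
  have "U \<in> measurable N (Pi\<^sub>M UNIV (\<lambda>_. borel))"
    using U by (intro measurable_PiM_single') auto
  then have "(\<lambda>z. (U z, Y z)) \<in> measurable N (Pi\<^sub>M UNIV (\<lambda>_. borel) \<Otimes>\<^sub>M Dm)"
    using Y by (intro measurable_Pair) auto
  from measurable_compose[OF this F] show ?thesis by simp
qed

lemma borel_measurable_oracle_mean_comp:
  fixes F :: "vec \<Rightarrow> 'a \<Rightarrow> real"
  assumes "sigma_finite_measure Dm"
    and F: "(\<lambda>(x, s). F x s) \<in> borel_measurable (Pi\<^sub>M UNIV (\<lambda>_. borel) \<Otimes>\<^sub>M Dm)"
    and U: "\<And>k. (\<lambda>z. U z k) \<in> borel_measurable N"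
  shows "(\<lambda>z. \<integral>s. F (U z) s \<partial>Dm) \<in> borel_measurable N"
proof -
  interpret sigma_finite_measure Dm by fact
  have "(\<lambda>x. \<integral>s. F x s \<partial>Dm) \<in> borel_measurable (Pi\<^sub>M UNIV (\<lambda>_. borel))"
    using F by (intro borel_measurable_lebesgue_integral) (simp add: case_prod_beta')
  moreover have "U \<in> measurable N (Pi\<^sub>M UNIV (\<lambda>_. borel))"
    using U by (intro measurable_PiM_single') auto
  ultimately show ?thesis using measurable_compose by blast
qed

lemma borel_measurable_radial_proj:
  assumes "\<And>j k. (\<lambda>z. A z j k) \<in> borel_measurable N"
  shows "(\<lambda>z. radial_proj m n r (A z) j k) \<in> borel_measurable N"
proof (cases "j < m \<and> k < n")
  case True
  note [measurable] = assms
  show ?thesis using True unfolding radial_proj_def fnorm_def by simp measurable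
next
  case False
  then show ?thesis unfolding radial_proj_def if_not_P[OF False] by simp
qed

lemma borel_measurable_chain:
  assumes "\<And>j a b. j \<in> {1..i} \<Longrightarrow> (\<lambda>z. V z j a b) \<in> borel_measurable N"
  shows "(\<lambda>z. chain d (V z) i a b) \<in> borel_measurable N"
  using assms
proof (induction i arbitrary: b)
  case (Suc i)
  have "(\<lambda>z. chain d (V z) i a l) \<in> borel_measurable N" "(\<lambda>z. V z (Suc i) l b) \<in> borel_measurable N" for l
    using Suc by auto
  then show ?case unfolding chain.simps mmul_def by (intro borel_measurable_sum borel_measurable_times)
qed simp

lemma borel_measurable_fnorm_sq:
  "(\<And>a b. (\<lambda>z. A z a b) \<in> borel_measurable N) \<Longrightarrow> (\<lambda>z. ennreal ((fnorm m n (A z))\<^sup>2)) \<in> borel_measurable N"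
  unfolding fnorm_def by measurable

lemma borel_measurable_vnorm_sq:
  "(\<And>k. (\<lambda>z. x z k) \<in> borel_measurable N) \<Longrightarrow> (\<lambda>z. ennreal ((vnorm n (x z))\<^sup>2)) \<in> borel_measurable N"
  unfolding vnorm_def by measurable

locale smvr_model = smvr_iterates d K Lf fo Jo \<eta> \<beta> w1
  for d K Lf and fo :: "nat \<Rightarrow> vec \<Rightarrow> 'a \<Rightarrow> vec" and Jo \<eta> \<beta> w1 +
  fixes M :: "'w measure" and D :: "nat \<Rightarrow> 'a measure" and \<xi> :: "nat \<Rightarrow> nat \<Rightarrow> 'w \<Rightarrow> 'a"
    and f :: "nat \<Rightarrow> vec \<Rightarrow> vec" and Jf :: "nat \<Rightarrow> vec \<Rightarrow> mat"
    and \<sigma>f \<sigma>J Lcf LcJ :: real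
  assumes K_ge_1: "1 \<le> K"
    and w1_vecs: "w1 \<in> vecs (d 0)"
    and fo_vecs: "\<And>i x s. i \<in> {1..K} \<Longrightarrow> x \<in> vecs (d (i - 1)) \<Longrightarrow> fo i x s \<in> vecs (d i)"
    and Jf_bounded: "\<And>i x. i \<in> {1..K} \<Longrightarrow> x \<in> vecs (d (i - 1)) \<Longrightarrow> fnorm (d (i - 1)) (d i) (Jf i x) \<le> Lf"
    and prob_M: "prob_space M"
    and prob_D: "\<And>i. i \<in> {1..K} \<Longrightarrow> prob_space (D i)"
    and fo_measurable: "\<And>i k. i \<in> {1..K} \<Longrightarrow>
      (\<lambda>(x, s). fo i x s k) \<in> borel_measurable (Pi\<^sub>M UNIV (\<lambda>_. borel) \<Otimes>\<^sub>M D i)"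
    and Jo_measurable: "\<And>i j k. i \<in> {1..K} \<Longrightarrow>
      (\<lambda>(x, s). Jo i x s j k) \<in> borel_measurable (Pi\<^sub>M UNIV (\<lambda>_. borel) \<Otimes>\<^sub>M D i)"
    and \<xi>_measurable: "\<And>t i. 1 \<le> t \<Longrightarrow> i \<in> {1..K} \<Longrightarrow> \<xi> t i \<in> measurable M (D i)"
    and \<xi>_distr: "\<And>t i. 1 \<le> t \<Longrightarrow> i \<in> {1..K} \<Longrightarrow> distr M (D i) (\<xi> t i) = D i"
    and \<xi>_indep: "prob_space.indep_vars M (\<lambda>(t, i). D i) (\<lambda>(t, i). \<xi> t i) ({1..} \<times> {1..K})"
    and fo_integrable: "\<And>i x k. i \<in> {1..K} \<Longrightarrow> x \<in> vecs (d (i - 1)) \<Longrightarrow> integrable (D i) (\<lambda>s. fo i x s k)"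
    and fo_mean: "\<And>i x k. i \<in> {1..K} \<Longrightarrow> x \<in> vecs (d (i - 1)) \<Longrightarrow> (\<integral>s. fo i x s k \<partial>D i) = f i x k"
    and Jo_integrable: "\<And>i x j k. i \<in> {1..K} \<Longrightarrow> x \<in> vecs (d (i - 1)) \<Longrightarrow>
      integrable (D i) (\<lambda>s. Jo i x s j k)"
    and Jo_mean: "\<And>i x j k. i \<in> {1..K} \<Longrightarrow> x \<in> vecs (d (i - 1)) \<Longrightarrow> (\<integral>s. Jo i x s j k \<partial>D i) = Jf i x j k"
    and fo_variance: "\<And>i x. i \<in> {1..K} \<Longrightarrow> x \<in> vecs (d (i - 1)) \<Longrightarrow>
      (\<integral>\<^sup>+s. ennreal ((vnorm (d i) (\<lambda>k. fo i x s k - f i x k))\<^sup>2) \<partial>D i) \<le> ennreal (\<sigma>f\<^sup>2)"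
    and Jo_variance: "\<And>i x. i \<in> {1..K} \<Longrightarrow> x \<in> vecs (d (i - 1)) \<Longrightarrow>
      (\<integral>\<^sup>+s. ennreal ((fnorm (d (i - 1)) (d i) (\<lambda>j k. Jo i x s j k - Jf i x j k))\<^sup>2) \<partial>D i) \<le> ennreal (\<sigma>J\<^sup>2)"
    and fo_mean_square_lipschitz: "\<And>i x y. i \<in> {1..K} \<Longrightarrow> x \<in> vecs (d (i - 1)) \<Longrightarrow> y \<in> vecs (d (i - 1)) \<Longrightarrow>
      (\<integral>\<^sup>+s. ennreal ((vnorm (d i) (\<lambda>k. fo i x s k - fo i y s k))\<^sup>2) \<partial>D i)
        \<le> ennreal (Lcf\<^sup>2 * (vnorm (d (i - 1)) (\<lambda>k. x k - y k))\<^sup>2)"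
    and Jo_mean_square_lipschitz: "\<And>i x y. i \<in> {1..K} \<Longrightarrow> x \<in> vecs (d (i - 1)) \<Longrightarrow> y \<in> vecs (d (i - 1)) \<Longrightarrow>
      (\<integral>\<^sup>+s. ennreal ((fnorm (d (i - 1)) (d i) (\<lambda>j k. Jo i x s j k - Jo i y s j k))\<^sup>2) \<partial>D i)
        \<le> ennreal (LcJ\<^sup>2 * (vnorm (d (i - 1)) (\<lambda>k. x k - y k))\<^sup>2)"
    and \<beta>_nonneg: "\<And>t. 0 \<le> \<beta> t" and \<beta>_le_1: "\<And>t. \<beta> t \<le> 1"
begin

lemma Lf_nonneg: "0 \<le> Lf"
proof -
  have "fnorm (d 0) (d 1) (Jf 1 (\<lambda>_. 0)) \<le> Lf"
    using Jf_bounded[of 1 "\<lambda>_. 0"] K_ge_1 by (simp add: vecs_def)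
  then show ?thesis using fnorm_nonneg order_trans by blast
qed

definition measurable_samples :: "'z measure \<Rightarrow> ('z \<Rightarrow> nat \<Rightarrow> nat \<Rightarrow> 'a) \<Rightarrow> bool" where
  "measurable_samples N X \<longleftrightarrow> (\<forall>s\<ge>1. \<forall>j\<in>{1..K}. (\<lambda>z. X z s j) \<in> measurable N (D j))"

lemma fo_sample_measurable:
  assumes "measurable_samples N X" "i \<in> {1..K}" "1 \<le> s" "\<And>k. (\<lambda>z. U z k) \<in> borel_measurable N"
  shows "(\<lambda>z. fo i (U z) (X z s i) k) \<in> borel_measurable N"
  using assms fo_measurable
  by (intro borel_measurable_oracle_comp[where F="\<lambda>x s. fo i x s k" and Dm="D i"])
    (auto simp: measurable_samples_def)

lemma Jo_sample_measurable:
  assumes "measurable_samples N X" "i \<in> {1..K}" "1 \<le> s" "\<And>k. (\<lambda>z. U z k) \<in> borel_measurable N"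
  shows "(\<lambda>z. Jo i (U z) (X z s i) a b) \<in> borel_measurable N"
  using assms Jo_measurable
  by (intro borel_measurable_oracle_comp[where F="\<lambda>x s. Jo i x s a b" and Dm="D i"])
    (auto simp: measurable_samples_def)

lemma smvr_U1_measurable:
  assumes "measurable_samples N X"
  shows "j \<le> K \<Longrightarrow> (\<lambda>z. smvr_U1 fo w1 (X z 1) j k) \<in> borel_measurable N"
proof (induction j arbitrary: k)
  case (Suc j)
  then show ?case using fo_sample_measurable[OF assms, of "Suc j" 1] by simp
qed simp

lemma smvr_Un_measurable:
  assumes "measurable_samples N X" "1 \<le> s"
    and Up: "\<And>j k. j \<le> K \<Longrightarrow> (\<lambda>z. Up z j k) \<in> borel_measurable N"
    and W: "\<And>k. (\<lambda>z. W z k) \<in> borel_measurable N"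
  shows "j \<le> K \<Longrightarrow> (\<lambda>z. smvr_Un fo b (Up z) (W z) (X z s) j k) \<in> borel_measurable N"
proof (induction j arbitrary: k)
  case (Suc j)
  have "(\<lambda>z. fo (Suc j) (smvr_Un fo b (Up z) (W z) (X z s) j) (X z s (Suc j)) k) \<in> borel_measurable N"
    "(\<lambda>z. fo (Suc j) (Up z j) (X z s (Suc j)) k) \<in> borel_measurable N"
    using Suc fo_sample_measurable[OF assms(1) _ assms(2)] Up by auto
  then show ?case using Up Suc.prems by simp
qed (use W in simp)

lemma proj_ball_measurable:
  assumes "\<And>a b. (\<lambda>z. A z a b) \<in> borel_measurable N"
  shows "(\<lambda>z. proj_ball m n Lf (A z) a b) \<in> borel_measurable N"
  unfolding proj_ball_eq_radial_proj[OF Lf_nonneg] using assms by (rule borel_measurable_radial_proj)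

lemma smvr_measurable:
  assumes X: "measurable_samples N X"
  shows "(\<forall>j\<le>K. \<forall>k. (\<lambda>z. smvr_u (X z) t j k) \<in> borel_measurable N)
     \<and> (\<forall>j\<in>{1..K}. \<forall>a b. (\<lambda>z. smvr_v (X z) t j a b) \<in> borel_measurable N)"
proof (induction t)
  case (Suc t)
  show ?case
  proof (cases "t = 0")
    case True
    then show ?thesis
      unfolding True smvr_one smvr_V1_def using smvr_U1_measurable[OF X]
      by (auto intro!: proj_ball_measurable Jo_sample_measurable[OF X])
  next
    case False
    let ?W = "\<lambda>z j. smvr_u (X z) t 0 j - \<eta> t * dirvec d K (smvr_v (X z) t) j"
    have u: "\<And>j k. j \<le> K \<Longrightarrow> (\<lambda>z. smvr_u (X z) t j k) \<in> borel_measurable N"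
      and v: "\<And>j a b. j \<in> {1..K} \<Longrightarrow> (\<lambda>z. smvr_v (X z) t j a b) \<in> borel_measurable N"
      using Suc.IH by auto
    have "(\<lambda>z. ?W z k) \<in> borel_measurable N" for k
      using u[of 0 k] borel_measurable_chain[of K "\<lambda>z. smvr_v (X z) t" N d k 0] v
      by (simp add: dirvec_def)
    then have u': "\<And>j k. j \<le> K \<Longrightarrow> (\<lambda>z. smvr_u (X z) (Suc t) j k) \<in> borel_measurable N"
      unfolding smvr_Suc[OF False] using smvr_Un_measurable[OF X _ u] by simp
    have "(\<lambda>z. smvr_v (X z) (Suc t) j a b) \<in> borel_measurable N" if j: "j \<in> {1..K}" for j a b
      unfolding smvr_Suc(2)[OF False] smvr_Vn_def
    proof (intro proj_ball_measurable)
      fix a b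
      have "(\<lambda>z. Jo j (smvr_u (X z) (Suc t) (j - 1)) (X z (Suc t) j) a b) \<in> borel_measurable N"
        "(\<lambda>z. Jo j (smvr_u (X z) t (j - 1)) (X z (Suc t) j) a b) \<in> borel_measurable N"
        using Jo_sample_measurable[OF X j] u u' j by auto
      then show "(\<lambda>z. (1 - \<beta> (Suc t)) * smvr_v (X z) t j a b
          + \<beta> (Suc t) * Jo j (smvr_u (X z) (Suc t) (j - 1)) (X z (Suc t) j) a b
          + (1 - \<beta> (Suc t)) * (Jo j (smvr_u (X z) (Suc t) (j - 1)) (X z (Suc t) j) a b
            - Jo j (smvr_u (X z) t (j - 1)) (X z (Suc t) j) a b)) \<in> borel_measurable N"
        using v j by (intro borel_measurable_add borel_measurable_diff borel_measurable_times) auto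
    qed
    then show ?thesis using u' by auto
  qed
qed simp

lemma smvr_u_in_vecs: "1 \<le> t \<Longrightarrow> j \<le> K \<Longrightarrow> smvr_u xs t j \<in> vecs (d j)"
  using smvr_u_vecs[OF K_ge_1 w1_vecs fo_vecs] by blast

lemma f_comp_measurable:
  assumes "i \<in> {1..K}" "\<And>k. (\<lambda>z. U z k) \<in> borel_measurable N" "\<And>z. U z \<in> vecs (d (i - 1))"
  shows "(\<lambda>z. f i (U z) k) \<in> borel_measurable N"
proof -
  have "(\<lambda>z. \<integral>s. fo i (U z) s k \<partial>D i) \<in> borel_measurable N"
    using assms prob_space_imp_sigma_finite[OF prob_D] fo_measurable
    by (intro borel_measurable_oracle_mean_comp[where F="\<lambda>x s. fo i x s k"]) auto
  then show ?thesis using assms by (simp add: fo_mean)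
qed

lemma Jf_comp_measurable:
  assumes "i \<in> {1..K}" "\<And>k. (\<lambda>z. U z k) \<in> borel_measurable N" "\<And>z. U z \<in> vecs (d (i - 1))"
  shows "(\<lambda>z. Jf i (U z) a b) \<in> borel_measurable N"
proof -
  have "(\<lambda>z. \<integral>s. Jo i (U z) s a b \<partial>D i) \<in> borel_measurable N"
    using assms prob_space_imp_sigma_finite[OF prob_D] Jo_measurable
    by (intro borel_measurable_oracle_mean_comp[where F="\<lambda>x s. Jo i x s a b"]) auto
  then show ?thesis using assms by (simp add: Jo_mean)
qed

definition jacobian_error :: "(nat \<Rightarrow> nat \<Rightarrow> 'a) \<Rightarrow> nat \<Rightarrow> nat \<Rightarrow> ennreal" where
  "jacobian_error xs t i =
     ennreal ((fnorm (d (i - 1)) (d i) (\<lambda>j k. smvr_v xs t i j k - Jf i (smvr_u xs t (i - 1)) j k))\<^sup>2)"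

definition value_error :: "(nat \<Rightarrow> nat \<Rightarrow> 'a) \<Rightarrow> nat \<Rightarrow> nat \<Rightarrow> ennreal" where
  "value_error xs t i = ennreal ((vnorm (d i) (\<lambda>k. smvr_u xs t i k - f i (smvr_u xs t (i - 1)) k))\<^sup>2)"

definition input_drift :: "(nat \<Rightarrow> nat \<Rightarrow> 'a) \<Rightarrow> nat \<Rightarrow> nat \<Rightarrow> ennreal" where
  "input_drift xs t i =
     ennreal ((vnorm (d (i - 1)) (\<lambda>k. smvr_u xs t (i - 1) k - smvr_u xs (t - 1) (i - 1) k))\<^sup>2)"

lemma tracking_errors_measurable:
  assumes X: "measurable_samples N X" and i: "i \<in> {1..K}"
  shows "1 \<le> t \<Longrightarrow> (\<lambda>z. jacobian_error (X z) t i) \<in> borel_measurable N"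
    and "1 \<le> t \<Longrightarrow> (\<lambda>z. value_error (X z) t i) \<in> borel_measurable N"
    and "(\<lambda>z. input_drift (X z) t i) \<in> borel_measurable N"
proof -
  have u: "\<And>t j k. j \<le> K \<Longrightarrow> (\<lambda>z. smvr_u (X z) t j k) \<in> borel_measurable N"
    and v: "\<And>t a b. (\<lambda>z. smvr_v (X z) t i a b) \<in> borel_measurable N"
    using smvr_measurable[OF X] i by auto
  show "(\<lambda>z. input_drift (X z) t i) \<in> borel_measurable N"
    unfolding input_drift_def using u i by (intro borel_measurable_vnorm_sq borel_measurable_diff) auto
  assume "1 \<le> t"
  then have in_vecs: "\<And>z. smvr_u (X z) t (i - 1) \<in> vecs (d (i - 1))" using smvr_u_in_vecs i by auto
  show "(\<lambda>z. jacobian_error (X z) t i) \<in> borel_measurable N"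
    unfolding jacobian_error_def using v u i in_vecs
    by (intro borel_measurable_fnorm_sq borel_measurable_diff Jf_comp_measurable) auto
  show "(\<lambda>z. value_error (X z) t i) \<in> borel_measurable N"
    unfolding value_error_def using u i in_vecs
    by (intro borel_measurable_vnorm_sq borel_measurable_diff f_comp_measurable) auto
qed

lemma tracking_errors_history_cong:
  assumes agree: "\<forall>(s, j)\<in>history t m. xs s j = xs' s j" and m: "m \<le> K"
    and t: "2 \<le> t" and i: "i \<in> {1..K}"
  shows "i \<le> m \<Longrightarrow> jacobian_error xs t i = jacobian_error xs' t i"
    and "i \<le> m \<Longrightarrow> value_error xs t i = value_error xs' t i"
    and "jacobian_error xs (t - 1) i = jacobian_error xs' (t - 1) i"
    and "value_error xs (t - 1) i = value_error xs' (t - 1) i"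
    and "i - 1 \<le> m \<Longrightarrow> input_drift xs t i = input_drift xs' t i"
proof -
  note same = smvr_history_cong[OF agree m t]
  have past: "smvr_u xs (t - 1) (i - 1) = smvr_u xs' (t - 1) (i - 1)"
    "smvr_u xs (t - 1) i = smvr_u xs' (t - 1) i" "smvr_v xs (t - 1) i = smvr_v xs' (t - 1) i"
    using same(1,2) i by auto
  then show "jacobian_error xs (t - 1) i = jacobian_error xs' (t - 1) i"
    and "value_error xs (t - 1) i = value_error xs' (t - 1) i"
    by (simp_all add: jacobian_error_def value_error_def)
  show "input_drift xs t i = input_drift xs' t i" if "i - 1 \<le> m"
    using past same(3)[OF that] by (simp add: input_drift_def)
  assume "i \<le> m"
  then have "smvr_u xs t i = smvr_u xs' t i" "smvr_u xs t (i - 1) = smvr_u xs' t (i - 1)"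
    "smvr_v xs t i = smvr_v xs' t i"
    using same(3,4) i by auto
  then show "jacobian_error xs t i = jacobian_error xs' t i" and "value_error xs t i = value_error xs' t i"
    by (simp_all add: jacobian_error_def value_error_def)
qed

text \<open>Samples outside \<open>A\<close> are replaced by fixed points of the sample spaces, turning a
  function of the sample array into a function on the product space indexed by \<open>A\<close>.\<close>
definition extend_samples :: "(nat \<times> nat) set \<Rightarrow> (nat \<times> nat \<Rightarrow> 'a) \<Rightarrow> nat \<Rightarrow> nat \<Rightarrow> 'a" where
  "extend_samples A z s j = (if (s, j) \<in> A then z (s, j) else (SOME y. y \<in> space (D j)))"

lemma measurable_samples_extend: "measurable_samples (Pi\<^sub>M A (\<lambda>(s, j). D j)) (extend_samples A)"
  unfolding measurable_samples_def
proof (intro allI impI ballI)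
  fix s j assume j: "j \<in> {1..K}"
  show "(\<lambda>z. extend_samples A z s j) \<in> Pi\<^sub>M A (\<lambda>(s, j). D j) \<rightarrow>\<^sub>M D j"
  proof (cases "(s, j) \<in> A")
    case True
    then show ?thesis
      using measurable_component_singleton[OF True, of "\<lambda>(s, j). D j"] by (simp add: extend_samples_def)
  next
    case False
    have "(SOME y. y \<in> space (D j)) \<in> space (D j)"
      using prob_space.not_empty[OF prob_D[OF j]] by (auto intro: someI_ex)
    then show ?thesis using False by (simp add: extend_samples_def)
  qed
qed

abbreviation samples :: "'w \<Rightarrow> nat \<Rightarrow> nat \<Rightarrow> 'a" where
  "samples \<omega> \<equiv> \<lambda>s j. \<xi> s j \<omega>"

lemma measurable_samples_\<xi>: "measurable_samples M samples"
  using \<xi>_measurable by (simp add: measurable_samples_def)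

lemma nn_integral_condition_on_history:
  assumes t: "2 \<le> t" and i: "i \<in> {1..K}"
    and H_history: "\<And>xs xs'. \<forall>(s, j)\<in>history t i. xs s j = xs' s j \<Longrightarrow> H xs = H xs'"
    and G_history: "\<And>xs xs'. \<forall>(s, j)\<in>history t (i - 1). xs s j = xs' s j \<Longrightarrow> G xs = G xs'"
    and H_meas: "\<And>A. (\<lambda>z. H (extend_samples A z)) \<in> borel_measurable (Pi\<^sub>M A (\<lambda>(s, j). D j))"
    and G_meas: "\<And>A. (\<lambda>z. G (extend_samples A z)) \<in> borel_measurable (Pi\<^sub>M A (\<lambda>(s, j). D j))"
    and bound: "\<And>xs. (\<integral>\<^sup>+y. H (xs(t := (xs t)(i := y))) \<partial>D i) \<le> G xs"
  shows "(\<integral>\<^sup>+\<omega>. H (samples \<omega>) \<partial>M) \<le> (\<integral>\<^sup>+\<omega>. G (samples \<omega>) \<partial>M)"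
proof -
  interpret M: prob_space M by (rule prob_M)
  let ?I = "history t (i - 1)" and ?N = "\<lambda>(s, j). D j" and ?X = "\<lambda>(s, j). \<xi> s j"
  have "1 \<le> t" using t by simp
  note hist = history_insert[OF this i]
  have "(\<integral>\<^sup>+\<omega>. H (extend_samples (insert (t, i) ?I) (\<lambda>p\<in>insert (t, i) ?I. ?X p \<omega>)) \<partial>M)
      \<le> (\<integral>\<^sup>+\<omega>. G (extend_samples ?I (\<lambda>p\<in>?I. ?X p \<omega>)) \<partial>M)"
  proof (rule M.nn_integral_indep_insert_le[where N="?N"])
    show "prob_space (?N p)" if "p \<in> insert (t, i) ?I" for p
      using that hist prob_D by auto
    show "M.indep_vars ?N ?X (insert (t, i) ?I)"
      using M.indep_vars_subset[OF \<xi>_indep] hist by simp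
    show "distr M (?N p) (?X p) = ?N p" if "p \<in> insert (t, i) ?I" for p
      using that hist \<xi>_distr by auto
    fix x assume "x \<in> space (Pi\<^sub>M ?I ?N)"
    have "extend_samples (insert (t, i) ?I) (x((t, i) := y))
        = (extend_samples ?I x)(t := (extend_samples ?I x t)(i := y))" for y
      using hist(2) by (auto simp: extend_samples_def fun_eq_iff)
    then show "(\<integral>\<^sup>+y. H (extend_samples (insert (t, i) ?I) (x((t, i) := y))) \<partial>?N (t, i))
        \<le> G (extend_samples ?I x)"
      using bound by simp
  qed (use hist H_meas G_meas in auto)
  moreover have "H (extend_samples (insert (t, i) ?I) (\<lambda>p\<in>insert (t, i) ?I. ?X p \<omega>)) = H (samples \<omega>)"
    for \<omega> by (rule H_history) (auto simp: extend_samples_def hist(1))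
  moreover have "G (extend_samples ?I (\<lambda>p\<in>?I. ?X p \<omega>)) = G (samples \<omega>)" for \<omega>
    by (rule G_history) (auto simp: extend_samples_def)
  ultimately show ?thesis by simp
qed

lemma jacobian_update_error_bound:
  assumes i: "i \<in> {1..K}" and x: "x \<in> vecs (d (i - 1))" "x' \<in> vecs (d (i - 1))"
    and b: "0 \<le> b" "b \<le> 1"
  shows "(\<integral>\<^sup>+y. ennreal ((fnorm (d (i - 1)) (d i) (\<lambda>j k. proj_ball (d (i - 1)) (d i) Lf
      (\<lambda>j k. (1 - b) * V j k + b * Jo i x y j k + (1 - b) * (Jo i x y j k - Jo i x' y j k)) j k
      - Jf i x j k))\<^sup>2) \<partial>D i)
    \<le> ennreal (1 - b) * ennreal ((fnorm (d (i - 1)) (d i) (\<lambda>j k. V j k - Jf i x' j k))\<^sup>2)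
      + ennreal (2 * b\<^sup>2 * \<sigma>J\<^sup>2) + ennreal (2 * LcJ\<^sup>2) * ennreal ((vnorm (d (i - 1)) (\<lambda>k. x k - x' k))\<^sup>2)"
proof -
  let ?S = "{..<d (i - 1)} \<times> {..<d i}"
  let ?V = "\<lambda>y j k. (1 - b) * V j k + b * Jo i x y j k + (1 - b) * (Jo i x y j k - Jo i x' y j k)"
  let ?P = "proj_ball (d (i - 1)) (d i) Lf"
  have closer: "(\<Sum>p\<in>?S. (?P (?V y) (fst p) (snd p) - Jf i x (fst p) (snd p))\<^sup>2)
      \<le> (\<Sum>p\<in>?S. (?V y (fst p) (snd p) - Jf i x (fst p) (snd p))\<^sup>2)" for y
    using proj_ball_closer[OF Lf_nonneg Jf_bounded[OF i x(1)], of "?V y"] by (simp add: fnorm_sq)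
  have "(\<integral>\<^sup>+y. ennreal (\<Sum>p\<in>?S. (?P (?V y) (fst p) (snd p) - Jf i x (fst p) (snd p))\<^sup>2) \<partial>D i)
    \<le> ennreal (1 - b) * ennreal (\<Sum>p\<in>?S. (V (fst p) (snd p) - Jf i x' (fst p) (snd p))\<^sup>2)
      + ennreal (2 * b\<^sup>2 * \<sigma>J\<^sup>2) + ennreal (2 * LcJ\<^sup>2) * ennreal ((vnorm (d (i - 1)) (\<lambda>k. x k - x' k))\<^sup>2)"
  proof (rule prob_space.nn_integral_momentum_error_le[OF prob_D[OF i] _ b])
    show "(\<integral>\<^sup>+y. ennreal (\<Sum>p\<in>?S. (Jo i x y (fst p) (snd p) - Jf i x (fst p) (snd p))\<^sup>2) \<partial>D i)
        \<le> ennreal (\<sigma>J\<^sup>2)"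
      using Jo_variance[OF i x(1)] by (simp add: fnorm_sq)
    show "(\<integral>\<^sup>+y. ennreal (\<Sum>p\<in>?S. (Jo i x y (fst p) (snd p) - Jo i x' y (fst p) (snd p))\<^sup>2) \<partial>D i)
        \<le> ennreal (LcJ\<^sup>2 * (vnorm (d (i - 1)) (\<lambda>k. x k - x' k))\<^sup>2)"
      using Jo_mean_square_lipschitz[OF i x] by (simp add: fnorm_sq)
    show "(\<Sum>p\<in>?S. (?P (?V y) (fst p) (snd p) - Jf i x (fst p) (snd p))\<^sup>2)
        \<le> (\<Sum>p\<in>?S. ((1 - b) * (V (fst p) (snd p) - Jf i x' (fst p) (snd p))
          + b * (Jo i x y (fst p) (snd p) - Jf i x (fst p) (snd p))
          + (1 - b) * ((Jo i x y (fst p) (snd p) - Jo i x' y (fst p) (snd p))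
            - (Jf i x (fst p) (snd p) - Jf i x' (fst p) (snd p))))\<^sup>2)" for y
      using closer[of y] by (simp add: algebra_simps)
  qed (use Jo_integrable Jo_mean i x in auto)
  then show ?thesis by (simp add: fnorm_sq)
qed

lemma value_update_error_bound:
  assumes i: "i \<in> {1..K}" and x: "x \<in> vecs (d (i - 1))" "x' \<in> vecs (d (i - 1))"
    and b: "0 \<le> b" "b \<le> 1"
  shows "(\<integral>\<^sup>+y. ennreal ((vnorm (d i) (\<lambda>k. (1 - b) * u k + b * fo i x y k
      + (1 - b) * (fo i x y k - fo i x' y k) - f i x k))\<^sup>2) \<partial>D i)
    \<le> ennreal (1 - b) * ennreal ((vnorm (d i) (\<lambda>k. u k - f i x' k))\<^sup>2)
      + ennreal (2 * b\<^sup>2 * \<sigma>f\<^sup>2) + ennreal (2 * Lcf\<^sup>2) * ennreal ((vnorm (d (i - 1)) (\<lambda>k. x k - x' k))\<^sup>2)"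
proof -
  have "(\<integral>\<^sup>+y. ennreal (\<Sum>k<d i. ((1 - b) * u k + b * fo i x y k
      + (1 - b) * (fo i x y k - fo i x' y k) - f i x k)\<^sup>2) \<partial>D i)
    \<le> ennreal (1 - b) * ennreal (\<Sum>k<d i. (u k - f i x' k)\<^sup>2)
      + ennreal (2 * b\<^sup>2 * \<sigma>f\<^sup>2) + ennreal (2 * Lcf\<^sup>2) * ennreal ((vnorm (d (i - 1)) (\<lambda>k. x k - x' k))\<^sup>2)"
  proof (rule prob_space.nn_integral_momentum_error_le[OF prob_D[OF i] _ b])
    show "(\<integral>\<^sup>+y. ennreal (\<Sum>k<d i. (fo i x y k - f i x k)\<^sup>2) \<partial>D i) \<le> ennreal (\<sigma>f\<^sup>2)"
      using fo_variance[OF i x(1)] by (simp add: vnorm_sq)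
    show "(\<integral>\<^sup>+y. ennreal (\<Sum>k<d i. (fo i x y k - fo i x' y k)\<^sup>2) \<partial>D i)
        \<le> ennreal (Lcf\<^sup>2 * (vnorm (d (i - 1)) (\<lambda>k. x k - x' k))\<^sup>2)"
      using fo_mean_square_lipschitz[OF i x] by (simp add: vnorm_sq)
    show "(\<Sum>k<d i. ((1 - b) * u k + b * fo i x y k + (1 - b) * (fo i x y k - fo i x' y k) - f i x k)\<^sup>2)
        \<le> (\<Sum>k<d i. ((1 - b) * (u k - f i x' k) + b * (fo i x y k - f i x k)
        + (1 - b) * ((fo i x y k - fo i x' y k) - (f i x k - f i x' k)))\<^sup>2)" for y
      by (simp add: algebra_simps)
  qed (use fo_integrable fo_mean i x in auto)
  then show ?thesis by (simp add: vnorm_sq)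
qed

lemma jacobian_error_conditional_bound:
  assumes t: "2 \<le> t" and i: "i \<in> {1..K}"
  shows "(\<integral>\<^sup>+y. jacobian_error (xs(t := (xs t)(i := y))) t i \<partial>D i)
    \<le> ennreal (1 - \<beta> t) * jacobian_error xs (t - 1) i + ennreal (2 * (\<beta> t)\<^sup>2 * \<sigma>J\<^sup>2)
      + ennreal (2 * LcJ\<^sup>2) * input_drift xs t i"
proof -
  let ?xs = "\<lambda>y. xs(t := (xs t)(i := y))"
  have agree: "\<forall>(s, j)\<in>history t (i - 1). ?xs y s j = xs s j" for y
    using i by (intro history_agree_update) simp
  have i_1: "i - 1 \<le> K" using i by auto
  have "smvr_u (?xs y) t (i - 1) = smvr_u xs t (i - 1)" for y
    by (rule smvr_history_cong(3)[OF agree i_1 t]) simp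
  moreover have "smvr_u (?xs y) (t - 1) (i - 1) = smvr_u xs (t - 1) (i - 1)" for y
    by (rule smvr_history_cong(1)[OF agree i_1 t]) (rule i_1)
  moreover have "smvr_v (?xs y) (t - 1) i = smvr_v xs (t - 1) i" for y
    by (rule smvr_history_cong(2)[OF agree i_1 t]) (use i in simp)
  ultimately have "jacobian_error (?xs y) t i = ennreal ((fnorm (d (i - 1)) (d i) (\<lambda>j k.
      proj_ball (d (i - 1)) (d i) Lf (\<lambda>j k. (1 - \<beta> t) * smvr_v xs (t - 1) i j k
        + \<beta> t * Jo i (smvr_u xs t (i - 1)) y j k
        + (1 - \<beta> t) * (Jo i (smvr_u xs t (i - 1)) y j k - Jo i (smvr_u xs (t - 1) (i - 1)) y j k)) j k
      - Jf i (smvr_u xs t (i - 1)) j k))\<^sup>2)" for y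
    unfolding jacobian_error_def smvr_v_recursion[OF t] by simp
  moreover have "smvr_u xs t (i - 1) \<in> vecs (d (i - 1))" "smvr_u xs (t - 1) (i - 1) \<in> vecs (d (i - 1))"
    using smvr_u_in_vecs t i by auto
  ultimately show ?thesis
    using jacobian_update_error_bound[OF i _ _ \<beta>_nonneg \<beta>_le_1]
    by (simp add: jacobian_error_def input_drift_def)
qed

lemma value_error_conditional_bound:
  assumes t: "2 \<le> t" and i: "i \<in> {1..K}"
  shows "(\<integral>\<^sup>+y. value_error (xs(t := (xs t)(i := y))) t i \<partial>D i)
    \<le> ennreal (1 - \<beta> t) * value_error xs (t - 1) i + ennreal (2 * (\<beta> t)\<^sup>2 * \<sigma>f\<^sup>2)
      + ennreal (2 * Lcf\<^sup>2) * input_drift xs t i"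
proof -
  let ?xs = "\<lambda>y. xs(t := (xs t)(i := y))"
  have agree: "\<forall>(s, j)\<in>history t (i - 1). ?xs y s j = xs s j" for y
    using i by (intro history_agree_update) simp
  have i_1: "i - 1 \<le> K" using i by auto
  have "smvr_u (?xs y) t (i - 1) = smvr_u xs t (i - 1)" for y
    by (rule smvr_history_cong(3)[OF agree i_1 t]) simp
  moreover have "smvr_u (?xs y) (t - 1) (i - 1) = smvr_u xs (t - 1) (i - 1)" for y
    by (rule smvr_history_cong(1)[OF agree i_1 t]) (rule i_1)
  moreover have "smvr_u (?xs y) (t - 1) i = smvr_u xs (t - 1) i" for y
    by (rule smvr_history_cong(1)[OF agree i_1 t]) (use i in simp)
  ultimately have "value_error (?xs y) t i = ennreal ((vnorm (d i) (\<lambda>k.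
      (1 - \<beta> t) * smvr_u xs (t - 1) i k + \<beta> t * fo i (smvr_u xs t (i - 1)) y k
      + (1 - \<beta> t) * (fo i (smvr_u xs t (i - 1)) y k - fo i (smvr_u xs (t - 1) (i - 1)) y k)
      - f i (smvr_u xs t (i - 1)) k))\<^sup>2)" for y
    using i by (subst value_error_def, subst smvr_u_recursion[OF t]) simp_all
  moreover have "smvr_u xs t (i - 1) \<in> vecs (d (i - 1))" "smvr_u xs (t - 1) (i - 1) \<in> vecs (d (i - 1))"
    using smvr_u_in_vecs t i by auto
  ultimately show ?thesis
    using value_update_error_bound[OF i _ _ \<beta>_nonneg \<beta>_le_1]
    by (simp add: value_error_def input_drift_def)
qed

lemma jacobian_error_recursion:
  assumes t: "2 \<le> t" and i: "i \<in> {1..K}"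
  shows "(\<integral>\<^sup>+\<omega>. jacobian_error (samples \<omega>) t i \<partial>M)
    \<le> ennreal (1 - \<beta> t) * (\<integral>\<^sup>+\<omega>. jacobian_error (samples \<omega>) (t - 1) i \<partial>M)
      + ennreal (2 * (\<beta> t)\<^sup>2 * \<sigma>J\<^sup>2) + ennreal (2 * LcJ\<^sup>2) * (\<integral>\<^sup>+\<omega>. input_drift (samples \<omega>) t i \<partial>M)"
proof -
  interpret M: prob_space M by (rule prob_M)
  have t1: "1 \<le> t" "1 \<le> t - 1" and i_1: "i - 1 \<le> K" using t i by auto
  let ?G = "\<lambda>xs. ennreal (1 - \<beta> t) * jacobian_error xs (t - 1) i + ennreal (2 * (\<beta> t)\<^sup>2 * \<sigma>J\<^sup>2)
    + ennreal (2 * LcJ\<^sup>2) * input_drift xs t i"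
  have "(\<integral>\<^sup>+\<omega>. jacobian_error (samples \<omega>) t i \<partial>M) \<le> (\<integral>\<^sup>+\<omega>. ?G (samples \<omega>) \<partial>M)"
  proof (rule nn_integral_condition_on_history[OF t i])
    show "jacobian_error xs t i = jacobian_error xs' t i"
      if "\<forall>(s, j)\<in>history t i. xs s j = xs' s j" for xs xs'
      using tracking_errors_history_cong(1)[OF that _ t i] i by simp
    show "?G xs = ?G xs'" if "\<forall>(s, j)\<in>history t (i - 1). xs s j = xs' s j" for xs xs'
      using tracking_errors_history_cong(3,5)[OF that i_1 t i] by simp
    show "(\<lambda>z. jacobian_error (extend_samples A z) t i) \<in> borel_measurable (Pi\<^sub>M A (\<lambda>(s, j). D j))" for A
      using tracking_errors_measurable(1)[OF measurable_samples_extend i t1(1)] .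
    show "(\<lambda>z. ?G (extend_samples A z)) \<in> borel_measurable (Pi\<^sub>M A (\<lambda>(s, j). D j))" for A
      using tracking_errors_measurable[OF measurable_samples_extend i] t1 by measurable
  qed (rule jacobian_error_conditional_bound[OF t i])
  also have "\<dots> = ennreal (1 - \<beta> t) * (\<integral>\<^sup>+\<omega>. jacobian_error (samples \<omega>) (t - 1) i \<partial>M)
      + ennreal (2 * (\<beta> t)\<^sup>2 * \<sigma>J\<^sup>2) + ennreal (2 * LcJ\<^sup>2) * (\<integral>\<^sup>+\<omega>. input_drift (samples \<omega>) t i \<partial>M)"
    using tracking_errors_measurable[OF measurable_samples_\<xi> i] t1 by (intro M.nn_integral_affine)
  finally show ?thesis .
qed

lemma value_error_recursion:
  assumes t: "2 \<le> t" and i: "i \<in> {1..K}"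
  shows "(\<integral>\<^sup>+\<omega>. value_error (samples \<omega>) t i \<partial>M)
    \<le> ennreal (1 - \<beta> t) * (\<integral>\<^sup>+\<omega>. value_error (samples \<omega>) (t - 1) i \<partial>M)
      + ennreal (2 * (\<beta> t)\<^sup>2 * \<sigma>f\<^sup>2) + ennreal (2 * Lcf\<^sup>2) * (\<integral>\<^sup>+\<omega>. input_drift (samples \<omega>) t i \<partial>M)"
proof -
  interpret M: prob_space M by (rule prob_M)
  have t1: "1 \<le> t" "1 \<le> t - 1" and i_1: "i - 1 \<le> K" using t i by auto
  let ?G = "\<lambda>xs. ennreal (1 - \<beta> t) * value_error xs (t - 1) i + ennreal (2 * (\<beta> t)\<^sup>2 * \<sigma>f\<^sup>2)
    + ennreal (2 * Lcf\<^sup>2) * input_drift xs t i"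
  have "(\<integral>\<^sup>+\<omega>. value_error (samples \<omega>) t i \<partial>M) \<le> (\<integral>\<^sup>+\<omega>. ?G (samples \<omega>) \<partial>M)"
  proof (rule nn_integral_condition_on_history[OF t i])
    show "value_error xs t i = value_error xs' t i"
      if "\<forall>(s, j)\<in>history t i. xs s j = xs' s j" for xs xs'
      using tracking_errors_history_cong(2)[OF that _ t i] i by simp
    show "?G xs = ?G xs'" if "\<forall>(s, j)\<in>history t (i - 1). xs s j = xs' s j" for xs xs'
      using tracking_errors_history_cong(4,5)[OF that i_1 t i] by simp
    show "(\<lambda>z. value_error (extend_samples A z) t i) \<in> borel_measurable (Pi\<^sub>M A (\<lambda>(s, j). D j))" for A
      using tracking_errors_measurable(2)[OF measurable_samples_extend i t1(1)] .
    show "(\<lambda>z. ?G (extend_samples A z)) \<in> borel_measurable (Pi\<^sub>M A (\<lambda>(s, j). D j))" for A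
      using tracking_errors_measurable[OF measurable_samples_extend i] t1 by measurable
  qed (rule value_error_conditional_bound[OF t i])
  also have "\<dots> = ennreal (1 - \<beta> t) * (\<integral>\<^sup>+\<omega>. value_error (samples \<omega>) (t - 1) i \<partial>M)
      + ennreal (2 * (\<beta> t)\<^sup>2 * \<sigma>f\<^sup>2) + ennreal (2 * Lcf\<^sup>2) * (\<integral>\<^sup>+\<omega>. input_drift (samples \<omega>) t i \<partial>M)"
    using tracking_errors_measurable[OF measurable_samples_\<xi> i] t1 by (intro M.nn_integral_affine)
  finally show ?thesis .
qed

end

theorem mainTheorem5:
  fixes M :: "'w measure" and D :: "nat \<Rightarrow> 'a measure"
    and \<xi> :: "nat \<Rightarrow> nat \<Rightarrow> 'w \<Rightarrow> 'a"
    and K :: nat and d :: "nat \<Rightarrow> nat"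
    and f :: "nat \<Rightarrow> vec \<Rightarrow> vec" and Jf :: "nat \<Rightarrow> vec \<Rightarrow> mat"
    and fo :: "nat \<Rightarrow> vec \<Rightarrow> 'a \<Rightarrow> vec" and Jo :: "nat \<Rightarrow> vec \<Rightarrow> 'a \<Rightarrow> mat"
    and Lf LJ \<sigma>f \<sigma>J Lcf LcJ :: real
    and \<eta> \<beta> :: "nat \<Rightarrow> real" and w1 :: vec
    and u :: "nat \<Rightarrow> nat \<Rightarrow> 'w \<Rightarrow> vec" and v :: "nat \<Rightarrow> nat \<Rightarrow> 'w \<Rightarrow> mat"
  defines "u \<equiv> (\<lambda>t i \<omega>. fst (smvr d K Lf fo Jo \<eta> \<beta> w1 (\<lambda>t' i'. \<xi> t' i' \<omega>) t) i)"
    and "v \<equiv> (\<lambda>t i \<omega>. snd (smvr d K Lf fo Jo \<eta> \<beta> w1 (\<lambda>t' i'. \<xi> t' i' \<omega>) t) i)"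
  assumes K: "1 \<le> K"
    and dims: "\<forall>i\<le>K. 0 < d i" "d K = 1"
    and f_type: "\<forall>i\<in>{1..K}. \<forall>x\<in>vecs (d (i - 1)). f i x \<in> vecs (d i) \<and> Jf i x \<in> mats (d (i - 1)) (d i)"
    and fo_type: "\<forall>i\<in>{1..K}. \<forall>x\<in>vecs (d (i - 1)). \<forall>s.
         fo i x s \<in> vecs (d i) \<and> Jo i x s \<in> mats (d (i - 1)) (d i)"
    and w1: "w1 \<in> vecs (d 0)"
    (* (A1) *)
    and jac: "\<forall>i\<in>{1..K}. is_tjacobian (d (i - 1)) (d i) (f i) (Jf i)"
    and A1_lip: "\<forall>i\<in>{1..K}. \<forall>x\<in>vecs (d (i - 1)). \<forall>y\<in>vecs (d (i - 1)).
         vnorm (d i) (\<lambda>k. f i x k - f i y k) \<le> Lf * vnorm (d (i - 1)) (\<lambda>k. x k - y k)"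
    and A1_bnd: "\<forall>i\<in>{1..K}. \<forall>x\<in>vecs (d (i - 1)). fnorm (d (i - 1)) (d i) (Jf i x) \<le> Lf"
    and A1_jlip: "\<forall>i\<in>{1..K}. \<forall>x\<in>vecs (d (i - 1)). \<forall>y\<in>vecs (d (i - 1)).
         fnorm (d (i - 1)) (d i) (\<lambda>j k. Jf i x j k - Jf i y j k) \<le> LJ * vnorm (d (i - 1)) (\<lambda>k. x k - y k)"
    and M: "prob_space M"
    and D: "\<forall>i\<in>{1..K}. prob_space (D i)"
    and fo_meas: "\<forall>i\<in>{1..K}. \<forall>k. (\<lambda>(x, s). fo i x s k) \<in> borel_measurable (Pi\<^sub>M UNIV (\<lambda>_. borel) \<Otimes>\<^sub>M D i)"
    and Jo_meas: "\<forall>i\<in>{1..K}. \<forall>j k. (\<lambda>(x, s). Jo i x s j k) \<in> borel_measurable (Pi\<^sub>M UNIV (\<lambda>_. borel) \<Otimes>\<^sub>M D i)"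
    and xi_meas: "\<forall>t\<ge>1. \<forall>i\<in>{1..K}. \<xi> t i \<in> measurable M (D i) \<and> distr M (D i) (\<xi> t i) = D i"
    and xi_indep: "prob_space.indep_vars M (\<lambda>(t, i). D i) (\<lambda>(t, i). \<xi> t i) ({1..} \<times> {1..K})"
    (* (A2) *)
    and A2_f_mean: "\<forall>i\<in>{1..K}. \<forall>x\<in>vecs (d (i - 1)). \<forall>k.
         integrable (D i) (\<lambda>s. fo i x s k) \<and> (\<integral>s. fo i x s k \<partial>D i) = f i x k"
    and A2_J_mean: "\<forall>i\<in>{1..K}. \<forall>x\<in>vecs (d (i - 1)). \<forall>j k.
         integrable (D i) (\<lambda>s. Jo i x s j k) \<and> (\<integral>s. Jo i x s j k \<partial>D i) = Jf i x j k"
    and A2_f_var: "\<forall>i\<in>{1..K}. \<forall>x\<in>vecs (d (i - 1)).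
         (\<integral>\<^sup>+s. ennreal ((vnorm (d i) (\<lambda>k. fo i x s k - f i x k))\<^sup>2) \<partial>D i) \<le> ennreal (\<sigma>f\<^sup>2)"
    and A2_J_var: "\<forall>i\<in>{1..K}. \<forall>x\<in>vecs (d (i - 1)).
         (\<integral>\<^sup>+s. ennreal ((fnorm (d (i - 1)) (d i) (\<lambda>j k. Jo i x s j k - Jf i x j k))\<^sup>2) \<partial>D i)
           \<le> ennreal (\<sigma>J\<^sup>2)"
    (* (A3) *)
    and A3_f: "\<forall>i\<in>{1..K}. \<forall>x\<in>vecs (d (i - 1)). \<forall>y\<in>vecs (d (i - 1)).
         (\<integral>\<^sup>+s. ennreal ((vnorm (d i) (\<lambda>k. fo i x s k - fo i y s k))\<^sup>2) \<partial>D i)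
           \<le> ennreal (Lcf\<^sup>2 * (vnorm (d (i - 1)) (\<lambda>k. x k - y k))\<^sup>2)"
    and A3_J: "\<forall>i\<in>{1..K}. \<forall>x\<in>vecs (d (i - 1)). \<forall>y\<in>vecs (d (i - 1)).
         (\<integral>\<^sup>+s. ennreal ((fnorm (d (i - 1)) (d i) (\<lambda>j k. Jo i x s j k - Jo i y s j k))\<^sup>2) \<partial>D i)
           \<le> ennreal (LcJ\<^sup>2 * (vnorm (d (i - 1)) (\<lambda>k. x k - y k))\<^sup>2)"
    and eta: "\<forall>t. 0 < \<eta> t"
    and beta: "\<forall>t. 0 \<le> \<beta> t \<and> \<beta> t \<le> 1"
  shows "\<forall>t\<ge>2. \<forall>i\<in>{1..K}.
     (\<integral>\<^sup>+\<omega>. ennreal ((fnorm (d (i - 1)) (d i) (\<lambda>j k. v t i \<omega> j k - Jf i (u t (i - 1) \<omega>) j k))\<^sup>2) \<partial>M)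
       \<le> ennreal (1 - \<beta> t) *
           (\<integral>\<^sup>+\<omega>. ennreal ((fnorm (d (i - 1)) (d i)
               (\<lambda>j k. v (t - 1) i \<omega> j k - Jf i (u (t - 1) (i - 1) \<omega>) j k))\<^sup>2) \<partial>M)
         + ennreal (2 * (\<beta> t)\<^sup>2 * \<sigma>J\<^sup>2)
         + ennreal (2 * LcJ\<^sup>2) *
           (\<integral>\<^sup>+\<omega>. ennreal ((vnorm (d (i - 1)) (\<lambda>k. u t (i - 1) \<omega> k - u (t - 1) (i - 1) \<omega> k))\<^sup>2) \<partial>M)
     \<and>
     (\<integral>\<^sup>+\<omega>. ennreal ((vnorm (d i) (\<lambda>k. u t i \<omega> k - f i (u t (i - 1) \<omega>) k))\<^sup>2) \<partial>M)
       \<le> ennreal (1 - \<beta> t) *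
           (\<integral>\<^sup>+\<omega>. ennreal ((vnorm (d i) (\<lambda>k. u (t - 1) i \<omega> k - f i (u (t - 1) (i - 1) \<omega>) k))\<^sup>2) \<partial>M)
         + ennreal (2 * (\<beta> t)\<^sup>2 * \<sigma>f\<^sup>2)
         + ennreal (2 * Lcf\<^sup>2) *
           (\<integral>\<^sup>+\<omega>. ennreal ((vnorm (d (i - 1)) (\<lambda>k. u t (i - 1) \<omega> k - u (t - 1) (i - 1) \<omega> k))\<^sup>2) \<partial>M)"
proof -
  interpret smvr_model d K Lf fo Jo \<eta> \<beta> w1 M D \<xi> f Jf \<sigma>f \<sigma>J Lcf LcJ
    by (intro smvr_model.intro)
      (use K w1 fo_type A1_bnd M D fo_meas Jo_meas xi_meas xi_indep A2_f_mean A2_J_mean A2_f_var A2_J_var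
        A3_f A3_J beta in auto)
  show ?thesis
    using jacobian_error_recursion value_error_recursion
    unfolding jacobian_error_def value_error_def input_drift_def u_def v_def by blast
qed

end
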